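(* Let $(\omega,\gamma,\mu,c)$ be a normalized quasi-abelian 3-cocycle on a finite crossed module $(G,X,\partial)$. Let $H=H(\omega,\gamma,\mu,c)$ be the vector space with basis $\{t_xg\}_{(x,g)\in X\times G}$, with product $(t_xg)(t_yh)=\delta_{x,{}^hy}\,\gamma_{g,h}(y)^{-1}\,t_y(gh)$, unit $1=\sum_{x\in X}t_xe$, coproduct $\Delta(t_xg)=\sum_{a,b\in X,\ ab=x}\mu_g(a,b)\,t_ag\otimes t_bg$, counit $\varepsilon(t_xg)=\delta_{x,e}$, Drinfeld associator $\Phi=\sum_{x,y,z\in X}\omega(x,y,z)\,t_xe\otimes t_ye\otimes t_ze$, elements $\alpha=1$, $\beta=\sum_{x\in X}\omega(x^{-1},x,x^{-1})\,t_xe$, linear map $S(t_xg)=\frac{\gamma_{g^{-1},g}(x^{-1})}{\mu_g(x,x^{-1})}\,t_{{}^g(x^{-1})}g^{-1}$, and $R=\sum_{x,y\in X}c(x,y)\,t_xe\otimes t_y\partial(x)$. Then these data make $H$ a quasi-triangular quasi-Hopf algebra (with antipode $(S,\alpha,\beta)$, $S$ an algebra anti-automorphism) with universal $R$-matrix $R$.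
   Context: $\mathbb{K}$ is an algebraically closed field of characteristic $0$. Quasi-Hopf and quasi-triangular quasi-Hopf algebras are in the sense of Drinfeld (as in Kassel, Quantum Groups, Chapter XV: a quasi-bialgebra $(H,\Delta,\varepsilon,\Phi)$ with antipode $(S,\alpha,\beta)$ and an invertible universal $R$-matrix). A finite crossed module is a triple $(G,X,\partial)$ with $G,X$ finite groups, $G$ acting on $X$ by automorphisms $(g,x)\mapsto {}^{g}x$, and $\partial:X\to G$ a homomorphism with ${}^{\partial(x)}x'=xx'x^{-1}$ and $\partial({}^gx)=g\partial(x)g^{-1}$. A quasi-abelian 3-cocycle on it is a quadruple $(\omega,\gamma,\mu,c)$ of functions $\omega:X^3\to\mathbb{K}^\times$, $(g,h,x)\mapsto\gamma_{g,h}(x)$ on $G\times G\times X$, $(g,x,y)\mapsto\mu_g(x,y)$ on $G\times X\times X$, $c:X^2\to\mathbb{K}^\times$, such that for all $g,h,k\in G$, $w,x,y,z\in X$: (a) $\omega(x,y,z)\omega(w,xy,z)\omega(w,x,y)=\omega(w,x,yz)\omega(wx,y,z)$; (b) $\gamma_{h,k}(x)\gamma_{g,hk}(x)=\gamma_{gh,k}(x)\gamma_{g,h}({}^kx)$; (c) $\frac{\mu_g(y,z)\mu_g(x,yz)}{\mu_g(xy,z)\mu_g(x,y)}=\frac{\omega({}^gx,{}^gy,{}^gz)}{\omega(x,y,z)}$; (d) $\frac{\gamma_{g,h}(x)\gamma_{g,h}(y)}{\gamma_{g,h}(xy)}=\frac{\mu_g({}^hx,{}^hy)\mu_h(x,y)}{\mu_{gh}(x,y)}$;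 (e) $\frac{c({}^gx,{}^gy)}{c(x,y)}=\frac{\mu_g(xyx^{-1},x)}{\mu_g(x,y)}\cdot\frac{\gamma_{g\partial(x)g^{-1},g}(y)}{\gamma_{g,\partial(x)}(y)}$; (f) $c(xy,z)=\frac{\omega(x,y,z)\,\omega((xy)z(xy)^{-1},x,y)}{\omega(x,yzy^{-1},y)\,\gamma_{\partial(x),\partial(y)}(z)}\,c(x,yzy^{-1})\,c(y,z)$; (g) $c(x,yz)=\frac{\omega(xyx^{-1},x,z)}{\omega(x,y,z)\,\omega(xyx^{-1},xzx^{-1},x)\,\mu_{\partial(x)}(y,z)}\,c(x,y)\,c(x,z)$. It is normalized if $\omega(x,y,z)=1$ whenever one of $x,y,z$ is $e$, $\gamma_{g,h}(x)=1$ whenever one of $g,h,x$ is $e$, $\mu_g(x,y)=1$ whenever one of $g,x,y$ is $e$, and $c(x,y)=1$ whenever $x$ or $y$ is $e$. *)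

theory Defs
  imports "HOL-Algebra.Group" "HOL-Computational_Algebra.Polynomial"
begin

definition alg_closed_field :: "'k::field itself \<Rightarrow> bool" where
  "alg_closed_field _ \<longleftrightarrow> (\<forall>p::'k poly. degree p \<noteq> 0 \<longrightarrow> (\<exists>z. poly p z = 0))"

definition finite_crossed_module ::
  "'g monoid \<Rightarrow> 'x monoid \<Rightarrow> ('g \<Rightarrow> 'x \<Rightarrow> 'x) \<Rightarrow> ('x \<Rightarrow> 'g) \<Rightarrow> bool" where
  "finite_crossed_module G X act d \<longleftrightarrow>
     group G \<and> group X \<and> finite (carrier G) \<and> finite (carrier X) \<and>
     (\<forall>g\<in>carrier G. \<forall>x\<in>carrier X. act g x \<in> carrier X) \<and>
     (\<forall>x\<in>carrier X. act \<one>\<^bsub>G\<^esub> x = x) \<and>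
     (\<forall>g\<in>carrier G. \<forall>h\<in>carrier G. \<forall>x\<in>carrier X.
        act (g \<otimes>\<^bsub>G\<^esub> h) x = act g (act h x)) \<and>
     (\<forall>g\<in>carrier G. \<forall>x\<in>carrier X. \<forall>y\<in>carrier X.
        act g (x \<otimes>\<^bsub>X\<^esub> y) = act g x \<otimes>\<^bsub>X\<^esub> act g y) \<and>
     d \<in> hom X G \<and>
     (\<forall>x\<in>carrier X. \<forall>x'\<in>carrier X.
        act (d x) x' = x \<otimes>\<^bsub>X\<^esub> x' \<otimes>\<^bsub>X\<^esub> inv\<^bsub>X\<^esub> x) \<and>
     (\<forall>g\<in>carrier G. \<forall>x\<in>carrier X.
        d (act g x) = g \<otimes>\<^bsub>G\<^esub> d x \<otimes>\<^bsub>G\<^esub> inv\<^bsub>G\<^esub> g)"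

definition quasi_abelian_3_cocycle ::
  "'g monoid \<Rightarrow> 'x monoid \<Rightarrow> ('g \<Rightarrow> 'x \<Rightarrow> 'x) \<Rightarrow> ('x \<Rightarrow> 'g) \<Rightarrow>
   ('x \<Rightarrow> 'x \<Rightarrow> 'x \<Rightarrow> 'k::field) \<Rightarrow> ('g \<Rightarrow> 'g \<Rightarrow> 'x \<Rightarrow> 'k) \<Rightarrow>
   ('g \<Rightarrow> 'x \<Rightarrow> 'x \<Rightarrow> 'k) \<Rightarrow> ('x \<Rightarrow> 'x \<Rightarrow> 'k) \<Rightarrow> bool" where
  "quasi_abelian_3_cocycle G X act d \<omega> \<gamma> \<mu> c \<longleftrightarrow>
     (\<forall>x\<in>carrier X. \<forall>y\<in>carrier X. \<forall>z\<in>carrier X. \<omega> x y z \<noteq> 0) \<and>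
     (\<forall>g\<in>carrier G. \<forall>h\<in>carrier G. \<forall>x\<in>carrier X. \<gamma> g h x \<noteq> 0) \<and>
     (\<forall>g\<in>carrier G. \<forall>x\<in>carrier X. \<forall>y\<in>carrier X. \<mu> g x y \<noteq> 0) \<and>
     (\<forall>x\<in>carrier X. \<forall>y\<in>carrier X. c x y \<noteq> 0) \<and>
     \<comment> \<open>(a)\<close>
     (\<forall>w\<in>carrier X. \<forall>x\<in>carrier X. \<forall>y\<in>carrier X. \<forall>z\<in>carrier X.
        \<omega> x y z * \<omega> w (x \<otimes>\<^bsub>X\<^esub> y) z * \<omega> w x y
        = \<omega> w x (y \<otimes>\<^bsub>X\<^esub> z) * \<omega> (w \<otimes>\<^bsub>X\<^esub> x) y z) \<and>
     \<comment> \<open>(b)\<close>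
     (\<forall>g\<in>carrier G. \<forall>h\<in>carrier G. \<forall>k\<in>carrier G. \<forall>x\<in>carrier X.
        \<gamma> h k x * \<gamma> g (h \<otimes>\<^bsub>G\<^esub> k) x = \<gamma> (g \<otimes>\<^bsub>G\<^esub> h) k x * \<gamma> g h (act k x)) \<and>
     \<comment> \<open>(c)\<close>
     (\<forall>g\<in>carrier G. \<forall>x\<in>carrier X. \<forall>y\<in>carrier X. \<forall>z\<in>carrier X.
        (\<mu> g y z * \<mu> g x (y \<otimes>\<^bsub>X\<^esub> z)) / (\<mu> g (x \<otimes>\<^bsub>X\<^esub> y) z * \<mu> g x y)
        = \<omega> (act g x) (act g y) (act g z) / \<omega> x y z) \<and>
     \<comment> \<open>(d)\<close>
     (\<forall>g\<in>carrier G. \<forall>h\<in>carrier G. \<forall>x\<in>carrier X. \<forall>y\<in>carrier X.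
        (\<gamma> g h x * \<gamma> g h y) / \<gamma> g h (x \<otimes>\<^bsub>X\<^esub> y)
        = (\<mu> g (act h x) (act h y) * \<mu> h x y) / \<mu> (g \<otimes>\<^bsub>G\<^esub> h) x y) \<and>
     \<comment> \<open>(e)\<close>
     (\<forall>g\<in>carrier G. \<forall>x\<in>carrier X. \<forall>y\<in>carrier X.
        c (act g x) (act g y) / c x y
        = (\<mu> g (x \<otimes>\<^bsub>X\<^esub> y \<otimes>\<^bsub>X\<^esub> inv\<^bsub>X\<^esub> x) x / \<mu> g x y) *
          (\<gamma> (g \<otimes>\<^bsub>G\<^esub> d x \<otimes>\<^bsub>G\<^esub> inv\<^bsub>G\<^esub> g) g y / \<gamma> g (d x) y)) \<and>
     \<comment> \<open>(f)\<close>
     (\<forall>x\<in>carrier X. \<forall>y\<in>carrier X. \<forall>z\<in>carrier X.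
        c (x \<otimes>\<^bsub>X\<^esub> y) z
        = (\<omega> x y z * \<omega> ((x \<otimes>\<^bsub>X\<^esub> y) \<otimes>\<^bsub>X\<^esub> z \<otimes>\<^bsub>X\<^esub> inv\<^bsub>X\<^esub> (x \<otimes>\<^bsub>X\<^esub> y)) x y)
          / (\<omega> x (y \<otimes>\<^bsub>X\<^esub> z \<otimes>\<^bsub>X\<^esub> inv\<^bsub>X\<^esub> y) y * \<gamma> (d x) (d y) z)
          * c x (y \<otimes>\<^bsub>X\<^esub> z \<otimes>\<^bsub>X\<^esub> inv\<^bsub>X\<^esub> y) * c y z) \<and>
     \<comment> \<open>(g)\<close>
     (\<forall>x\<in>carrier X. \<forall>y\<in>carrier X. \<forall>z\<in>carrier X.
        c x (y \<otimes>\<^bsub>X\<^esub> z)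
        = \<omega> (x \<otimes>\<^bsub>X\<^esub> y \<otimes>\<^bsub>X\<^esub> inv\<^bsub>X\<^esub> x) x z
          / (\<omega> x y z * \<omega> (x \<otimes>\<^bsub>X\<^esub> y \<otimes>\<^bsub>X\<^esub> inv\<^bsub>X\<^esub> x)
                              (x \<otimes>\<^bsub>X\<^esub> z \<otimes>\<^bsub>X\<^esub> inv\<^bsub>X\<^esub> x) x
             * \<mu> (d x) y z)
          * c x y * c x z)"

definition normalized_cocycle ::
  "'g monoid \<Rightarrow> 'x monoid \<Rightarrow>
   ('x \<Rightarrow> 'x \<Rightarrow> 'x \<Rightarrow> 'k::field) \<Rightarrow> ('g \<Rightarrow> 'g \<Rightarrow> 'x \<Rightarrow> 'k) \<Rightarrow>
   ('g \<Rightarrow> 'x \<Rightarrow> 'x \<Rightarrow> 'k) \<Rightarrow> ('x \<Rightarrow> 'x \<Rightarrow> 'k) \<Rightarrow> bool" where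
  "normalized_cocycle G X \<omega> \<gamma> \<mu> c \<longleftrightarrow>
     (\<forall>x\<in>carrier X. \<forall>y\<in>carrier X. \<forall>z\<in>carrier X.
        (x = \<one>\<^bsub>X\<^esub> \<or> y = \<one>\<^bsub>X\<^esub> \<or> z = \<one>\<^bsub>X\<^esub>) \<longrightarrow> \<omega> x y z = 1) \<and>
     (\<forall>g\<in>carrier G. \<forall>h\<in>carrier G. \<forall>x\<in>carrier X.
        (g = \<one>\<^bsub>G\<^esub> \<or> h = \<one>\<^bsub>G\<^esub> \<or> x = \<one>\<^bsub>X\<^esub>) \<longrightarrow> \<gamma> g h x = 1) \<and>
     (\<forall>g\<in>carrier G. \<forall>x\<in>carrier X. \<forall>y\<in>carrier X.
        (g = \<one>\<^bsub>G\<^esub> \<or> x = \<one>\<^bsub>X\<^esub> \<or> y = \<one>\<^bsub>X\<^esub>) \<longrightarrow> \<mu> g x y = 1) \<and>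
     (\<forall>x\<in>carrier X. \<forall>y\<in>carrier X.
        (x = \<one>\<^bsub>X\<^esub> \<or> y = \<one>\<^bsub>X\<^esub>) \<longrightarrow> c x y = 1)"

section \<open>Finite-dimensional algebras given on a finite basis\<close>

text \<open>A vector of H (with finite basis B) is a coefficient function vanishing outside B;
  elements of H\<otimes>H, H\<otimes>H\<otimes>H, H\<otimes>H\<otimes>H\<otimes>H are coefficient functions on B\<times>B etc.
  The algebra H is given by structure constants sc (e_i e_j = \<Sum>_p sc i j p e_p),
  the coproduct by dc (\<Delta> e_i = \<Sum>_{p,q} dc i p q e_p\<otimes>e_q), the counit by its
  values ep on the basis, the linear map S by its matrix sm (S e_i = \<Sum>_p sm i p e_p).\<close>

definition ext0 :: "'a set \<Rightarrow> ('a \<Rightarrow> 'k::zero) \<Rightarrow> 'a \<Rightarrow> 'k" where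
  "ext0 A f = (\<lambda>x. if x \<in> A then f x else 0)"

definition V1 :: "'b set \<Rightarrow> ('b \<Rightarrow> 'k::zero) set" where
  "V1 B = {v. \<forall>i. i \<notin> B \<longrightarrow> v i = 0}"
definition V2 :: "'b set \<Rightarrow> ('b \<times> 'b \<Rightarrow> 'k::zero) set" where
  "V2 B = {v. \<forall>i. i \<notin> B \<times> B \<longrightarrow> v i = 0}"
definition V3 :: "'b set \<Rightarrow> ('b \<times> 'b \<times> 'b \<Rightarrow> 'k::zero) set" where
  "V3 B = {v. \<forall>i. i \<notin> B \<times> B \<times> B \<longrightarrow> v i = 0}"

definition bvec :: "'b \<Rightarrow> 'b \<Rightarrow> 'k::{zero,one}" where
  "bvec i = (\<lambda>j. if j = i then 1 else 0)"

definition smult1 :: "'k::times \<Rightarrow> ('b \<Rightarrow> 'k) \<Rightarrow> 'b \<Rightarrow> 'k" where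
  "smult1 a v = (\<lambda>p. a * v p)"

definition mul1 :: "'b set \<Rightarrow> ('b \<Rightarrow> 'b \<Rightarrow> 'b \<Rightarrow> 'k::field) \<Rightarrow>
    ('b \<Rightarrow> 'k) \<Rightarrow> ('b \<Rightarrow> 'k) \<Rightarrow> 'b \<Rightarrow> 'k" where
  "mul1 B sc u v = ext0 B (\<lambda>p. \<Sum>i\<in>B. \<Sum>k\<in>B. u i * v k * sc i k p)"

definition mul2 :: "'b set \<Rightarrow> ('b \<Rightarrow> 'b \<Rightarrow> 'b \<Rightarrow> 'k::field) \<Rightarrow>
    ('b \<times> 'b \<Rightarrow> 'k) \<Rightarrow> ('b \<times> 'b \<Rightarrow> 'k) \<Rightarrow> 'b \<times> 'b \<Rightarrow> 'k" where
  "mul2 B sc u v = ext0 (B \<times> B) (\<lambda>(p, q).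
     \<Sum>(i, j)\<in>B \<times> B. \<Sum>(k, l)\<in>B \<times> B. u (i, j) * v (k, l) * sc i k p * sc j l q)"

definition mul3 :: "'b set \<Rightarrow> ('b \<Rightarrow> 'b \<Rightarrow> 'b \<Rightarrow> 'k::field) \<Rightarrow>
    ('b \<times> 'b \<times> 'b \<Rightarrow> 'k) \<Rightarrow> ('b \<times> 'b \<times> 'b \<Rightarrow> 'k) \<Rightarrow> 'b \<times> 'b \<times> 'b \<Rightarrow> 'k" where
  "mul3 B sc u v = ext0 (B \<times> B \<times> B) (\<lambda>(p, q, r).
     \<Sum>(i, j, k)\<in>B \<times> B \<times> B. \<Sum>(i', j', k')\<in>B \<times> B \<times> B.
       u (i, j, k) * v (i', j', k') * sc i i' p * sc j j' q * sc k k' r)"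

definition mul4 :: "'b set \<Rightarrow> ('b \<Rightarrow> 'b \<Rightarrow> 'b \<Rightarrow> 'k::field) \<Rightarrow>
    ('b \<times> 'b \<times> 'b \<times> 'b \<Rightarrow> 'k) \<Rightarrow> ('b \<times> 'b \<times> 'b \<times> 'b \<Rightarrow> 'k) \<Rightarrow> 'b \<times> 'b \<times> 'b \<times> 'b \<Rightarrow> 'k" where
  "mul4 B sc u v = ext0 (B \<times> B \<times> B \<times> B) (\<lambda>(p, q, r, s).
     \<Sum>(i, j, k, l)\<in>B \<times> B \<times> B \<times> B. \<Sum>(i', j', k', l')\<in>B \<times> B \<times> B \<times> B.
       u (i, j, k, l) * v (i', j', k', l') * sc i i' p * sc j j' q * sc k k' r * sc l l' s)"

definition one2 :: "('b \<Rightarrow> 'k::times) \<Rightarrow> 'b \<times> 'b \<Rightarrow> 'k" where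
  "one2 un = (\<lambda>(p, q). un p * un q)"
definition one3 :: "('b \<Rightarrow> 'k::times) \<Rightarrow> 'b \<times> 'b \<times> 'b \<Rightarrow> 'k" where
  "one3 un = (\<lambda>(p, q, r). un p * un q * un r)"

definition invertible2 where
  "invertible2 B sc un u \<longleftrightarrow> (\<exists>v\<in>V2 B. mul2 B sc u v = one2 un \<and> mul2 B sc v u = one2 un)"
definition inv2 where
  "inv2 B sc un u = (THE v. v \<in> V2 B \<and> mul2 B sc u v = one2 un \<and> mul2 B sc v u = one2 un)"
definition invertible3 where
  "invertible3 B sc un u \<longleftrightarrow> (\<exists>v\<in>V3 B. mul3 B sc u v = one3 un \<and> mul3 B sc v u = one3 un)"
definition inv3 where
  "inv3 B sc un u = (THE v. v \<in> V3 B \<and> mul3 B sc u v = one3 un \<and> mul3 B sc v u = one3 un)"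

definition Delta :: "'b set \<Rightarrow> ('b \<Rightarrow> 'b \<Rightarrow> 'b \<Rightarrow> 'k::field) \<Rightarrow> ('b \<Rightarrow> 'k) \<Rightarrow> 'b \<times> 'b \<Rightarrow> 'k" where
  "Delta B dc u = ext0 (B \<times> B) (\<lambda>(p, q). \<Sum>i\<in>B. u i * dc i p q)"

definition Delta_op :: "'b set \<Rightarrow> ('b \<Rightarrow> 'b \<Rightarrow> 'b \<Rightarrow> 'k::field) \<Rightarrow> ('b \<Rightarrow> 'k) \<Rightarrow> 'b \<times> 'b \<Rightarrow> 'k" where
  "Delta_op B dc u = (\<lambda>(p, q). Delta B dc u (q, p))"

definition Delta_x_id :: "'b set \<Rightarrow> ('b \<Rightarrow> 'b \<Rightarrow> 'b \<Rightarrow> 'k::field) \<Rightarrow> ('b \<times> 'b \<Rightarrow> 'k) \<Rightarrow> 'b \<times> 'b \<times> 'b \<Rightarrow> 'k" where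
  "Delta_x_id B dc u = ext0 (B \<times> B \<times> B) (\<lambda>(p, q, r). \<Sum>i\<in>B. u (i, r) * dc i p q)"
definition id_x_Delta :: "'b set \<Rightarrow> ('b \<Rightarrow> 'b \<Rightarrow> 'b \<Rightarrow> 'k::field) \<Rightarrow> ('b \<times> 'b \<Rightarrow> 'k) \<Rightarrow> 'b \<times> 'b \<times> 'b \<Rightarrow> 'k" where
  "id_x_Delta B dc u = ext0 (B \<times> B \<times> B) (\<lambda>(p, q, r). \<Sum>j\<in>B. u (p, j) * dc j q r)"

definition Delta_1_3 :: "'b set \<Rightarrow> ('b \<Rightarrow> 'b \<Rightarrow> 'b \<Rightarrow> 'k::field) \<Rightarrow> ('b \<times> 'b \<times> 'b \<Rightarrow> 'k) \<Rightarrow> 'b \<times> 'b \<times> 'b \<times> 'b \<Rightarrow> 'k" where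
  "Delta_1_3 B dc u = ext0 (B \<times> B \<times> B \<times> B) (\<lambda>(p, q, r, s). \<Sum>i\<in>B. u (i, r, s) * dc i p q)"
definition Delta_2_3 :: "'b set \<Rightarrow> ('b \<Rightarrow> 'b \<Rightarrow> 'b \<Rightarrow> 'k::field) \<Rightarrow> ('b \<times> 'b \<times> 'b \<Rightarrow> 'k) \<Rightarrow> 'b \<times> 'b \<times> 'b \<times> 'b \<Rightarrow> 'k" where
  "Delta_2_3 B dc u = ext0 (B \<times> B \<times> B \<times> B) (\<lambda>(p, q, r, s). \<Sum>j\<in>B. u (p, j, s) * dc j q r)"
definition Delta_3_3 :: "'b set \<Rightarrow> ('b \<Rightarrow> 'b \<Rightarrow> 'b \<Rightarrow> 'k::field) \<Rightarrow> ('b \<times> 'b \<times> 'b \<Rightarrow> 'k) \<Rightarrow> 'b \<times> 'b \<times> 'b \<times> 'b \<Rightarrow> 'k" where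
  "Delta_3_3 B dc u = ext0 (B \<times> B \<times> B \<times> B) (\<lambda>(p, q, r, s). \<Sum>k\<in>B. u (p, q, k) * dc k r s)"

definition one_x3 :: "('b \<Rightarrow> 'k::times) \<Rightarrow> ('b \<times> 'b \<times> 'b \<Rightarrow> 'k) \<Rightarrow> 'b \<times> 'b \<times> 'b \<times> 'b \<Rightarrow> 'k" where
  "one_x3 un u = (\<lambda>(p, q, r, s). un p * u (q, r, s))"
definition x3_one :: "('b \<Rightarrow> 'k::times) \<Rightarrow> ('b \<times> 'b \<times> 'b \<Rightarrow> 'k) \<Rightarrow> 'b \<times> 'b \<times> 'b \<times> 'b \<Rightarrow> 'k" where
  "x3_one un u = (\<lambda>(p, q, r, s). u (p, q, r) * un s)"

definition eps :: "'b set \<Rightarrow> ('b \<Rightarrow> 'k::field) \<Rightarrow> ('b \<Rightarrow> 'k) \<Rightarrow> 'k" where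
  "eps B ep u = (\<Sum>i\<in>B. u i * ep i)"
definition eps_x_id :: "'b set \<Rightarrow> ('b \<Rightarrow> 'k::field) \<Rightarrow> ('b \<times> 'b \<Rightarrow> 'k) \<Rightarrow> 'b \<Rightarrow> 'k" where
  "eps_x_id B ep u = ext0 B (\<lambda>q. \<Sum>p\<in>B. ep p * u (p, q))"
definition id_x_eps :: "'b set \<Rightarrow> ('b \<Rightarrow> 'k::field) \<Rightarrow> ('b \<times> 'b \<Rightarrow> 'k) \<Rightarrow> 'b \<Rightarrow> 'k" where
  "id_x_eps B ep u = ext0 B (\<lambda>p. \<Sum>q\<in>B. u (p, q) * ep q)"
definition id_eps_id :: "'b set \<Rightarrow> ('b \<Rightarrow> 'k::field) \<Rightarrow> ('b \<times> 'b \<times> 'b \<Rightarrow> 'k) \<Rightarrow> 'b \<times> 'b \<Rightarrow> 'k" where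
  "id_eps_id B ep u = ext0 (B \<times> B) (\<lambda>(p, r). \<Sum>q\<in>B. u (p, q, r) * ep q)"

definition lin_map :: "'b set \<Rightarrow> ('b \<Rightarrow> 'b \<Rightarrow> 'k::field) \<Rightarrow> ('b \<Rightarrow> 'k) \<Rightarrow> 'b \<Rightarrow> 'k" where
  "lin_map B sm u = ext0 B (\<lambda>p. \<Sum>i\<in>B. u i * sm i p)"

text \<open>Leg notation: for u = \<Sum> X\<otimes>Y\<otimes>Z, u_{ijk} puts X in slot i, Y in slot j, Z in slot k
  (so \<Phi>_{312} = \<Sum> Y\<otimes>Z\<otimes>X); likewise R_{13} = \<Sum> R'\<otimes>1\<otimes>R'' etc.\<close>
definition leg312 :: "('b \<times> 'b \<times> 'b \<Rightarrow> 'k) \<Rightarrow> 'b \<times> 'b \<times> 'b \<Rightarrow> 'k" where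
  "leg312 u = (\<lambda>(s1, s2, s3). u (s3, s1, s2))"
definition leg231 :: "('b \<times> 'b \<times> 'b \<Rightarrow> 'k) \<Rightarrow> 'b \<times> 'b \<times> 'b \<Rightarrow> 'k" where
  "leg231 u = (\<lambda>(s1, s2, s3). u (s2, s3, s1))"
definition leg213 :: "('b \<times> 'b \<times> 'b \<Rightarrow> 'k) \<Rightarrow> 'b \<times> 'b \<times> 'b \<Rightarrow> 'k" where
  "leg213 u = (\<lambda>(s1, s2, s3). u (s2, s1, s3))"
definition leg132 :: "('b \<times> 'b \<times> 'b \<Rightarrow> 'k) \<Rightarrow> 'b \<times> 'b \<times> 'b \<Rightarrow> 'k" where
  "leg132 u = (\<lambda>(s1, s2, s3). u (s1, s3, s2))"

definition R12 :: "('b \<Rightarrow> 'k::times) \<Rightarrow> ('b \<times> 'b \<Rightarrow> 'k) \<Rightarrow> 'b \<times> 'b \<times> 'b \<Rightarrow> 'k" where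
  "R12 un R = (\<lambda>(p, q, r). R (p, q) * un r)"
definition R13 :: "('b \<Rightarrow> 'k::times) \<Rightarrow> ('b \<times> 'b \<Rightarrow> 'k) \<Rightarrow> 'b \<times> 'b \<times> 'b \<Rightarrow> 'k" where
  "R13 un R = (\<lambda>(p, q, r). R (p, r) * un q)"
definition R23 :: "('b \<Rightarrow> 'k::times) \<Rightarrow> ('b \<times> 'b \<Rightarrow> 'k) \<Rightarrow> 'b \<times> 'b \<times> 'b \<Rightarrow> 'k" where
  "R23 un R = (\<lambda>(p, q, r). un p * R (q, r))"

section \<open>Quasi-bialgebras, quasi-Hopf algebras, quasi-triangularity (Drinfeld / Kassel XV)\<close>

definition quasi_bialgebra ::
  "'b set \<Rightarrow> ('b \<Rightarrow> 'b \<Rightarrow> 'b \<Rightarrow> 'k::field) \<Rightarrow> ('b \<Rightarrow> 'k) \<Rightarrow>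
   ('b \<Rightarrow> 'b \<Rightarrow> 'b \<Rightarrow> 'k) \<Rightarrow> ('b \<Rightarrow> 'k) \<Rightarrow> ('b \<times> 'b \<times> 'b \<Rightarrow> 'k) \<Rightarrow> bool" where
  "quasi_bialgebra B sc un dc ep Phi \<longleftrightarrow>
     finite B \<and> un \<in> V1 B \<and> Phi \<in> V3 B \<and>
     \<comment> \<open>associative unital algebra\<close>
     (\<forall>u\<in>V1 B. \<forall>v\<in>V1 B. \<forall>w\<in>V1 B.
        mul1 B sc (mul1 B sc u v) w = mul1 B sc u (mul1 B sc v w)) \<and>
     (\<forall>u\<in>V1 B. mul1 B sc un u = u \<and> mul1 B sc u un = u) \<and>
     \<comment> \<open>\<Delta> and \<epsilon> are algebra morphisms\<close>
     (\<forall>u\<in>V1 B. \<forall>v\<in>V1 B. Delta B dc (mul1 B sc u v) = mul2 B sc (Delta B dc u) (Delta B dc v)) \<and>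
     Delta B dc un = one2 un \<and>
     (\<forall>u\<in>V1 B. \<forall>v\<in>V1 B. eps B ep (mul1 B sc u v) = eps B ep u * eps B ep v) \<and>
     eps B ep un = 1 \<and>
     \<comment> \<open>\<Phi> invertible, quasi-coassociativity, pentagon\<close>
     invertible3 B sc un Phi \<and>
     (\<forall>a\<in>V1 B. id_x_Delta B dc (Delta B dc a)
        = mul3 B sc (mul3 B sc Phi (Delta_x_id B dc (Delta B dc a))) (inv3 B sc un Phi)) \<and>
     mul4 B sc (Delta_3_3 B dc Phi) (Delta_1_3 B dc Phi)
       = mul4 B sc (mul4 B sc (one_x3 un Phi) (Delta_2_3 B dc Phi)) (x3_one un Phi) \<and>
     \<comment> \<open>counit axioms\<close>
     (\<forall>a\<in>V1 B. eps_x_id B ep (Delta B dc a) = a \<and> id_x_eps B ep (Delta B dc a) = a) \<and>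
     id_eps_id B ep Phi = one2 un"

definition quasi_hopf_algebra ::
  "'b set \<Rightarrow> ('b \<Rightarrow> 'b \<Rightarrow> 'b \<Rightarrow> 'k::field) \<Rightarrow> ('b \<Rightarrow> 'k) \<Rightarrow>
   ('b \<Rightarrow> 'b \<Rightarrow> 'b \<Rightarrow> 'k) \<Rightarrow> ('b \<Rightarrow> 'k) \<Rightarrow> ('b \<times> 'b \<times> 'b \<Rightarrow> 'k) \<Rightarrow>
   ('b \<Rightarrow> 'b \<Rightarrow> 'k) \<Rightarrow> ('b \<Rightarrow> 'k) \<Rightarrow> ('b \<Rightarrow> 'k) \<Rightarrow> bool" where
  "quasi_hopf_algebra B sc un dc ep Phi sm al be \<longleftrightarrow>
     quasi_bialgebra B sc un dc ep Phi \<and> al \<in> V1 B \<and> be \<in> V1 B \<and>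
     (let m = mul1 B sc; S = lin_map B sm; D = Delta B dc; Psi = inv3 B sc un Phi in
     \<comment> \<open>S is an algebra anti-automorphism\<close>
     bij_betw S (V1 B) (V1 B) \<and> S un = un \<and>
     (\<forall>u\<in>V1 B. \<forall>v\<in>V1 B. S (m u v) = m (S v) (S u)) \<and>
     \<comment> \<open>\<Sum> S(a') \<alpha> a'' = \<epsilon>(a) \<alpha>,  \<Sum> a' \<beta> S(a'') = \<epsilon>(a) \<beta>\<close>
     (\<forall>a\<in>V1 B. (\<lambda>p. \<Sum>i\<in>B. \<Sum>j\<in>B. D a (i, j) * m (m (S (bvec i)) al) (bvec j) p)
                 = smult1 (eps B ep a) al) \<and>
     (\<forall>a\<in>V1 B. (\<lambda>p. \<Sum>i\<in>B. \<Sum>j\<in>B. D a (i, j) * m (m (bvec i) be) (S (bvec j)) p)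
                 = smult1 (eps B ep a) be) \<and>
     \<comment> \<open>\<Sum> X \<beta> S(Y) \<alpha> Z = 1 for \<Phi> = \<Sum> X\<otimes>Y\<otimes>Z\<close>
     (\<lambda>p. \<Sum>(i, j, k)\<in>B \<times> B \<times> B.
        Phi (i, j, k) * m (m (m (m (bvec i) be) (S (bvec j))) al) (bvec k) p) = un \<and>
     \<comment> \<open>\<Sum> S(x) \<alpha> y \<beta> S(z) = 1 for \<Phi>^-1 = \<Sum> x\<otimes>y\<otimes>z\<close>
     (\<lambda>p. \<Sum>(i, j, k)\<in>B \<times> B \<times> B.
        Psi (i, j, k) * m (m (m (m (S (bvec i)) al) (bvec j)) be) (S (bvec k)) p) = un)"

definition qt_quasi_hopf_algebra ::
  "'b set \<Rightarrow> ('b \<Rightarrow> 'b \<Rightarrow> 'b \<Rightarrow> 'k::field) \<Rightarrow> ('b \<Rightarrow> 'k) \<Rightarrow>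
   ('b \<Rightarrow> 'b \<Rightarrow> 'b \<Rightarrow> 'k) \<Rightarrow> ('b \<Rightarrow> 'k) \<Rightarrow> ('b \<times> 'b \<times> 'b \<Rightarrow> 'k) \<Rightarrow>
   ('b \<Rightarrow> 'b \<Rightarrow> 'k) \<Rightarrow> ('b \<Rightarrow> 'k) \<Rightarrow> ('b \<Rightarrow> 'k) \<Rightarrow> ('b \<times> 'b \<Rightarrow> 'k) \<Rightarrow> bool" where
  "qt_quasi_hopf_algebra B sc un dc ep Phi sm al be R \<longleftrightarrow>
     quasi_hopf_algebra B sc un dc ep Phi sm al be \<and> R \<in> V2 B \<and>
     invertible2 B sc un R \<and>
     (let m2 = mul2 B sc; m3 = mul3 B sc; Psi = inv3 B sc un Phi in
     (\<forall>a\<in>V1 B. Delta_op B dc a = m2 (m2 R (Delta B dc a)) (inv2 B sc un R)) \<and>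
     \<comment> \<open>(\<Delta>\<otimes>id)(R) = \<Phi>_{312} R_{13} \<Phi>^-1_{132} R_{23} \<Phi>\<close>
     Delta_x_id B dc R
       = m3 (m3 (m3 (m3 (leg312 Phi) (R13 un R)) (leg132 Psi)) (R23 un R)) Phi \<and>
     \<comment> \<open>(id\<otimes>\<Delta>)(R) = \<Phi>^-1_{231} R_{13} \<Phi>_{213} R_{12} \<Phi>^-1\<close>
     id_x_Delta B dc R
       = m3 (m3 (m3 (m3 (leg231 Psi) (R13 un R)) (leg213 Phi)) (R12 un R)) Psi)"

section \<open>The algebra H(\<omega>,\<gamma>,\<mu>,c) on the basis {t_x g}, indexed by (x,g) \<in> X \<times> G\<close>

definition H_basis :: "'g monoid \<Rightarrow> 'x monoid \<Rightarrow> ('x \<times> 'g) set" where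
  "H_basis G X = carrier X \<times> carrier G"

definition H_sc :: "'g monoid \<Rightarrow> 'x monoid \<Rightarrow> ('g \<Rightarrow> 'x \<Rightarrow> 'x) \<Rightarrow> ('g \<Rightarrow> 'g \<Rightarrow> 'x \<Rightarrow> 'k::field) \<Rightarrow>
    'x \<times> 'g \<Rightarrow> 'x \<times> 'g \<Rightarrow> 'x \<times> 'g \<Rightarrow> 'k" where
  "H_sc G X act \<gamma> = (\<lambda>(x, g) (y, h) (z, k).
     if x = act h y \<and> z = y \<and> k = g \<otimes>\<^bsub>G\<^esub> h then inverse (\<gamma> g h y) else 0)"

definition H_unit :: "'g monoid \<Rightarrow> 'x monoid \<Rightarrow> 'x \<times> 'g \<Rightarrow> 'k::field" where
  "H_unit G X = ext0 (H_basis G X) (\<lambda>(x, g). if g = \<one>\<^bsub>G\<^esub> then 1 else 0)"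

definition H_dc :: "'g monoid \<Rightarrow> 'x monoid \<Rightarrow> ('g \<Rightarrow> 'x \<Rightarrow> 'x \<Rightarrow> 'k::field) \<Rightarrow>
    'x \<times> 'g \<Rightarrow> 'x \<times> 'g \<Rightarrow> 'x \<times> 'g \<Rightarrow> 'k" where
  "H_dc G X \<mu> = (\<lambda>(x, g) (a, g1) (b, g2).
     if g1 = g \<and> g2 = g \<and> a \<otimes>\<^bsub>X\<^esub> b = x then \<mu> g a b else 0)"

definition H_ep :: "'g monoid \<Rightarrow> 'x monoid \<Rightarrow> 'x \<times> 'g \<Rightarrow> 'k::field" where
  "H_ep G X = (\<lambda>(x, g). if x = \<one>\<^bsub>X\<^esub> then 1 else 0)"

definition H_Phi :: "'g monoid \<Rightarrow> 'x monoid \<Rightarrow> ('x \<Rightarrow> 'x \<Rightarrow> 'x \<Rightarrow> 'k::field) \<Rightarrow>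
    ('x \<times> 'g) \<times> ('x \<times> 'g) \<times> ('x \<times> 'g) \<Rightarrow> 'k" where
  "H_Phi G X \<omega> = ext0 (H_basis G X \<times> H_basis G X \<times> H_basis G X)
     (\<lambda>((x, g1), (y, g2), (z, g3)).
        if g1 = \<one>\<^bsub>G\<^esub> \<and> g2 = \<one>\<^bsub>G\<^esub> \<and> g3 = \<one>\<^bsub>G\<^esub> then \<omega> x y z else 0)"

definition H_beta :: "'g monoid \<Rightarrow> 'x monoid \<Rightarrow> ('x \<Rightarrow> 'x \<Rightarrow> 'x \<Rightarrow> 'k::field) \<Rightarrow> 'x \<times> 'g \<Rightarrow> 'k" where
  "H_beta G X \<omega> = ext0 (H_basis G X) (\<lambda>(x, g).
     if g = \<one>\<^bsub>G\<^esub> then \<omega> (inv\<^bsub>X\<^esub> x) x (inv\<^bsub>X\<^esub> x) else 0)"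

definition H_sm :: "'g monoid \<Rightarrow> 'x monoid \<Rightarrow> ('g \<Rightarrow> 'x \<Rightarrow> 'x) \<Rightarrow>
    ('g \<Rightarrow> 'g \<Rightarrow> 'x \<Rightarrow> 'k::field) \<Rightarrow> ('g \<Rightarrow> 'x \<Rightarrow> 'x \<Rightarrow> 'k) \<Rightarrow> 'x \<times> 'g \<Rightarrow> 'x \<times> 'g \<Rightarrow> 'k" where
  "H_sm G X act \<gamma> \<mu> = (\<lambda>(x, g) (y, h).
     if y = act g (inv\<^bsub>X\<^esub> x) \<and> h = inv\<^bsub>G\<^esub> g
     then \<gamma> (inv\<^bsub>G\<^esub> g) g (inv\<^bsub>X\<^esub> x) / \<mu> g x (inv\<^bsub>X\<^esub> x) else 0)"

definition H_R :: "'g monoid \<Rightarrow> 'x monoid \<Rightarrow> ('x \<Rightarrow> 'g) \<Rightarrow> ('x \<Rightarrow> 'x \<Rightarrow> 'k::field) \<Rightarrow>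
    ('x \<times> 'g) \<times> ('x \<times> 'g) \<Rightarrow> 'k" where
  "H_R G X d c = ext0 (H_basis G X \<times> H_basis G X) (\<lambda>((x, g), (y, h)).
     if g = \<one>\<^bsub>G\<^esub> \<and> h = d x then c x y else 0)"

end

theory Submission
  imports Defs
begin

text \<open>
  Every tensor that occurs in the axioms is a \<^emph>\<open>graph vector\<close>: in each tensor factor it is
  supported on basis elements \<open>t\<^sub>x g\<close> whose group component \<open>g\<close> is a prescribed function
  of the \<open>X\<close>-components. Since \<open>(t\<^sub>x g)(t\<^sub>y h)\<close> is nonzero only for \<open>x = \<^sup>hy\<close>, the product of
  two graph vectors is again a graph vector whose coefficient function is computed in closed form.
  Each axiom of a quasi-triangular quasi-Hopf algebra thereby becomes a pointwise identity
  between coefficient functions, and that identity is one of the cocycle conditions (a)--(g),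
  occasionally combined with the normalization.
\<close>

section \<open>Algebras given by structure constants on a finite basis\<close>

definition sc_associative :: "'b set \<Rightarrow> ('b \<Rightarrow> 'b \<Rightarrow> 'b \<Rightarrow> 'k::field) \<Rightarrow> bool" where
  "sc_associative B sc \<longleftrightarrow> (\<forall>i\<in>B. \<forall>l\<in>B. \<forall>k\<in>B. \<forall>p\<in>B.
     (\<Sum>j\<in>B. sc i l j * sc j k p) = (\<Sum>j\<in>B. sc l k j * sc i j p))"

definition sc_left_unit :: "'b set \<Rightarrow> ('b \<Rightarrow> 'b \<Rightarrow> 'b \<Rightarrow> 'k::field) \<Rightarrow> ('b \<Rightarrow> 'k) \<Rightarrow> bool" where
  "sc_left_unit B sc un \<longleftrightarrow> (\<forall>k\<in>B. \<forall>p\<in>B. (\<Sum>i\<in>B. un i * sc i k p) = (if k = p then 1 else 0))"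

definition sc_right_unit :: "'b set \<Rightarrow> ('b \<Rightarrow> 'b \<Rightarrow> 'b \<Rightarrow> 'k::field) \<Rightarrow> ('b \<Rightarrow> 'k) \<Rightarrow> bool" where
  "sc_right_unit B sc un \<longleftrightarrow> (\<forall>k\<in>B. \<forall>p\<in>B. (\<Sum>i\<in>B. un i * sc k i p) = (if k = p then 1 else 0))"

lemma sum_eq_single:
  assumes "finite A" "t \<in> A" "\<And>i. i \<in> A \<Longrightarrow> i \<noteq> t \<Longrightarrow> f i = 0"
  shows "sum f A = f t"
  using sum.mono_neutral_right[of A "{t}" f] assms by auto

lemma sum_diagonal:
  assumes "finite A" "\<And>a b. a \<in> A \<Longrightarrow> b \<in> A \<Longrightarrow> a \<noteq> b \<Longrightarrow> F (a, b) = 0"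
  shows "(\<Sum>ab\<in>A \<times> A. F ab) = (\<Sum>a\<in>A. F (a, a))"
proof -
  have "(\<Sum>ab\<in>A \<times> A. F ab) = (\<Sum>a\<in>A. \<Sum>b\<in>A. F (a, b))" by (simp add: sum.cartesian_product)
  also have "\<dots> = (\<Sum>a\<in>A. F (a, a))"
    by (intro sum.cong refl sum_eq_single) (use assms in auto)
  finally show ?thesis .
qed

lemma sum_over_image_support:
  assumes "finite S" "inj_on \<phi> A" "\<phi> ` A \<subseteq> S" "\<And>s. s \<in> S \<Longrightarrow> s \<notin> \<phi> ` A \<Longrightarrow> h s = 0"
  shows "sum h S = sum (h \<circ> \<phi>) A"
proof -
  have "sum h S = sum h (\<phi> ` A)"
    using assms by (intro sum.mono_neutral_right) auto
  also have "\<dots> = sum (h \<circ> \<phi>) A" using assms(2) by (rule sum.reindex)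
  finally show ?thesis .
qed

lemma sum_sum_single:
  assumes "finite A" "finite B" "P \<Longrightarrow> x0 \<in> A" "P \<Longrightarrow> y0 \<in> B"
  shows "(\<Sum>x\<in>A. \<Sum>y\<in>B. f x y * (if P \<and> x = x0 \<and> y = y0 then c else 0)) =
    (if P then f x0 y0 * c else (0 :: 'c::semiring_0))"
proof (cases P)
  case True
  have "(\<Sum>x\<in>A. \<Sum>y\<in>B. f x y * (if P \<and> x = x0 \<and> y = y0 then c else 0)) =
      (\<Sum>y\<in>B. f x0 y * (if y = y0 then c else 0))"
    using True assms by (subst sum_eq_single[where t=x0]) auto
  also have "\<dots> = f x0 y0 * c"
    using True assms by (subst sum_eq_single[where t=y0]) auto
  finally show ?thesis using True by simp
qed simp

lemma sum_product_split:
  "(\<Sum>(j1, j2)\<in>A \<times> B. (f j1 :: 'k::comm_semiring_0) * g j2) = (\<Sum>j1\<in>A. f j1) * (\<Sum>j2\<in>B. g j2)"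
  by (simp add: sum.cartesian_product[symmetric] sum_product)

lemma sum_reorder4:
  "(\<Sum>j\<in>B. \<Sum>k\<in>C. \<Sum>i\<in>A. \<Sum>l\<in>D. f i l k j) = (\<Sum>i\<in>A. \<Sum>l\<in>D. \<Sum>k\<in>C. \<Sum>j\<in>B. f i l k j)"
proof -
  have "(\<Sum>j\<in>B. \<Sum>k\<in>C. \<Sum>i\<in>A. \<Sum>l\<in>D. f i l k j) = (\<Sum>j\<in>B. \<Sum>i\<in>A. \<Sum>k\<in>C. \<Sum>l\<in>D. f i l k j)"
    by (rule sum.cong[OF refl], rule sum.swap)
  also have "\<dots> = (\<Sum>j\<in>B. \<Sum>i\<in>A. \<Sum>l\<in>D. \<Sum>k\<in>C. f i l k j)"
    by (rule sum.cong[OF refl], rule sum.cong[OF refl], rule sum.swap)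
  also have "\<dots> = (\<Sum>i\<in>A. \<Sum>j\<in>B. \<Sum>l\<in>D. \<Sum>k\<in>C. f i l k j)"
    by (rule sum.swap)
  also have "\<dots> = (\<Sum>i\<in>A. \<Sum>l\<in>D. \<Sum>j\<in>B. \<Sum>k\<in>C. f i l k j)"
    by (rule sum.cong[OF refl], rule sum.swap)
  also have "\<dots> = (\<Sum>i\<in>A. \<Sum>l\<in>D. \<Sum>k\<in>C. \<Sum>j\<in>B. f i l k j)"
    by (rule sum.cong[OF refl], rule sum.cong[OF refl], rule sum.swap)
  finally show ?thesis .
qed

lemma sum_rotate3:
  "(\<Sum>l\<in>A. \<Sum>k\<in>C. \<Sum>j\<in>B. f l k j) = (\<Sum>j\<in>B. \<Sum>l\<in>A. \<Sum>k\<in>C. f l k j)"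
proof -
  have "(\<Sum>l\<in>A. \<Sum>k\<in>C. \<Sum>j\<in>B. f l k j) = (\<Sum>l\<in>A. \<Sum>j\<in>B. \<Sum>k\<in>C. f l k j)"
    by (rule sum.cong[OF refl], rule sum.swap)
  also have "\<dots> = (\<Sum>j\<in>B. \<Sum>l\<in>A. \<Sum>k\<in>C. f l k j)" by (rule sum.swap)
  finally show ?thesis .
qed

lemma mul1_associative:
  assumes "sc_associative B sc"
  shows "mul1 B sc (mul1 B sc u v) w = mul1 B sc u (mul1 B sc v w)"
proof
  fix p
  show "mul1 B sc (mul1 B sc u v) w p = mul1 B sc u (mul1 B sc v w) p"
  proof (cases "p \<in> B")
    case False thus ?thesis by (simp add: mul1_def ext0_def)
  next
    case True
    have "mul1 B sc (mul1 B sc u v) w p =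
        (\<Sum>j\<in>B. \<Sum>k\<in>B. (\<Sum>i\<in>B. \<Sum>l\<in>B. u i * v l * sc i l j) * w k * sc j k p)"
      using True by (simp add: mul1_def ext0_def cong: sum.cong)
    also have "\<dots> = (\<Sum>j\<in>B. \<Sum>k\<in>B. \<Sum>i\<in>B. \<Sum>l\<in>B. u i * v l * w k * (sc i l j * sc j k p))"
      by (simp add: sum_distrib_left sum_distrib_right ac_simps)
    also have "\<dots> = (\<Sum>i\<in>B. \<Sum>l\<in>B. \<Sum>k\<in>B. \<Sum>j\<in>B. u i * v l * w k * (sc i l j * sc j k p))"
      by (rule sum_reorder4)
    also have "\<dots> = (\<Sum>i\<in>B. \<Sum>l\<in>B. \<Sum>k\<in>B. u i * v l * w k * (\<Sum>j\<in>B. sc i l j * sc j k p))"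
      by (simp add: sum_distrib_left)
    also have "\<dots> = (\<Sum>i\<in>B. \<Sum>l\<in>B. \<Sum>k\<in>B. u i * v l * w k * (\<Sum>j\<in>B. sc l k j * sc i j p))"
      using assms True unfolding sc_associative_def by (intro sum.cong refl) auto
    also have "\<dots> = (\<Sum>i\<in>B. \<Sum>l\<in>B. \<Sum>k\<in>B. \<Sum>j\<in>B. u i * (v l * w k * sc l k j) * sc i j p)"
      by (simp add: sum_distrib_left ac_simps)
    also have "\<dots> = (\<Sum>i\<in>B. \<Sum>j\<in>B. \<Sum>l\<in>B. \<Sum>k\<in>B. u i * (v l * w k * sc l k j) * sc i j p)"
      by (rule sum.cong[OF refl], rule sum_rotate3)
    also have "\<dots> = mul1 B sc u (mul1 B sc v w) p"
      using True by (simp add: mul1_def ext0_def sum_distrib_left sum_distrib_right cong: sum.cong)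
    finally show ?thesis .
  qed
qed

lemma mul1_left_unit:
  assumes "finite B" "sc_left_unit B sc un" "u \<in> V1 B"
  shows "mul1 B sc un u = u"
proof
  fix p
  show "mul1 B sc un u p = u p"
  proof (cases "p \<in> B")
    case False thus ?thesis using assms(3) by (simp add: mul1_def ext0_def V1_def)
  next
    case True
    have "mul1 B sc un u p = (\<Sum>i\<in>B. \<Sum>k\<in>B. u k * (un i * sc i k p))"
      using True by (simp add: mul1_def ext0_def ac_simps)
    also have "\<dots> = (\<Sum>k\<in>B. u k * (\<Sum>i\<in>B. un i * sc i k p))"
      by (subst sum.swap) (simp add: sum_distrib_left)
    also have "\<dots> = (\<Sum>k\<in>B. u k * (if k = p then 1 else 0))"
      using assms(2) True unfolding sc_left_unit_def by (intro sum.cong refl) auto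
    finally show ?thesis using True assms(1) by (simp add: if_distrib cong: if_cong)
  qed
qed

lemma mul1_right_unit:
  assumes "finite B" "sc_right_unit B sc un" "u \<in> V1 B"
  shows "mul1 B sc u un = u"
proof
  fix p
  show "mul1 B sc u un p = u p"
  proof (cases "p \<in> B")
    case False thus ?thesis using assms(3) by (simp add: mul1_def ext0_def V1_def)
  next
    case True
    have "mul1 B sc u un p = (\<Sum>k\<in>B. u k * (\<Sum>i\<in>B. un i * sc k i p))"
      using True by (simp add: mul1_def ext0_def sum_distrib_left ac_simps)
    also have "\<dots> = (\<Sum>k\<in>B. u k * (if k = p then 1 else 0))"
      using assms(2) True unfolding sc_right_unit_def by (intro sum.cong refl) auto
    finally show ?thesis using True assms(1) by (simp add: if_distrib cong: if_cong)
  qed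
qed

lemma mul1_inverse_unique:
  assumes "finite B" "sc_associative B sc" "sc_left_unit B sc un" "sc_right_unit B sc un"
    and "v \<in> V1 B" "w \<in> V1 B" "mul1 B sc v u = un" "mul1 B sc u w = un"
  shows "v = w"
proof -
  have "v = mul1 B sc v (mul1 B sc u w)" using assms mul1_right_unit by metis
  also have "\<dots> = mul1 B sc (mul1 B sc v u) w" using assms(2) by (simp add: mul1_associative)
  also have "\<dots> = w" using assms mul1_left_unit by metis
  finally show ?thesis .
qed

definition sc_tensor :: "('a \<Rightarrow> 'a \<Rightarrow> 'a \<Rightarrow> 'k::field) \<Rightarrow> ('b \<Rightarrow> 'b \<Rightarrow> 'b \<Rightarrow> 'k) \<Rightarrow>
    'a \<times> 'b \<Rightarrow> 'a \<times> 'b \<Rightarrow> 'a \<times> 'b \<Rightarrow> 'k" where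
  "sc_tensor sa sb = (\<lambda>(i, j) (k, l) (p, q). sa i k p * sb j l q)"

lemma sc_associative_tensor:
  assumes "sc_associative A sa" "sc_associative B sb"
  shows "sc_associative (A \<times> B) (sc_tensor sa sb)"
  unfolding sc_associative_def
proof clarify
  fix i1 i2 l1 l2 k1 k2 p1 p2
  assume m: "i1 \<in> A" "i2 \<in> B" "l1 \<in> A" "l2 \<in> B" "k1 \<in> A" "k2 \<in> B" "p1 \<in> A" "p2 \<in> B"
  have "(\<Sum>j\<in>A \<times> B. sc_tensor sa sb (i1, i2) (l1, l2) j * sc_tensor sa sb j (k1, k2) (p1, p2))
      = (\<Sum>j1\<in>A. sa i1 l1 j1 * sa j1 k1 p1) * (\<Sum>j2\<in>B. sb i2 l2 j2 * sb j2 k2 p2)"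
    unfolding sum_product_split[symmetric] by (intro sum.cong refl) (auto simp: sc_tensor_def)
  also have "\<dots> = (\<Sum>j1\<in>A. sa l1 k1 j1 * sa i1 j1 p1) * (\<Sum>j2\<in>B. sb l2 k2 j2 * sb i2 j2 p2)"
    using assms m unfolding sc_associative_def by simp
  also have "\<dots> = (\<Sum>j\<in>A \<times> B. sc_tensor sa sb (l1, l2) (k1, k2) j * sc_tensor sa sb (i1, i2) j (p1, p2))"
    unfolding sum_product_split[symmetric] by (intro sum.cong refl) (auto simp: sc_tensor_def)
  finally show "(\<Sum>j\<in>A \<times> B. sc_tensor sa sb (i1, i2) (l1, l2) j * sc_tensor sa sb j (k1, k2) (p1, p2))
      = (\<Sum>j\<in>A \<times> B. sc_tensor sa sb (l1, l2) (k1, k2) j * sc_tensor sa sb (i1, i2) j (p1, p2))" .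
qed

lemma sc_left_unit_tensor:
  assumes "sc_left_unit A sa ua" "sc_left_unit B sb ub"
  shows "sc_left_unit (A \<times> B) (sc_tensor sa sb) (\<lambda>(p, q). ua p * ub q)"
  unfolding sc_left_unit_def
proof clarify
  fix k1 k2 p1 p2
  assume m: "k1 \<in> A" "k2 \<in> B" "p1 \<in> A" "p2 \<in> B"
  have "(\<Sum>i\<in>A \<times> B. (case i of (p, q) \<Rightarrow> ua p * ub q) * sc_tensor sa sb i (k1, k2) (p1, p2))
     = (\<Sum>i1\<in>A. ua i1 * sa i1 k1 p1) * (\<Sum>i2\<in>B. ub i2 * sb i2 k2 p2)"
    unfolding sum_product_split[symmetric] by (intro sum.cong refl) (auto simp: sc_tensor_def)
  then show "(\<Sum>i\<in>A \<times> B. (case i of (p, q) \<Rightarrow> ua p * ub q) * sc_tensor sa sb i (k1, k2) (p1, p2))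
     = (if (k1, k2) = (p1, p2) then 1 else 0)"
    using assms m unfolding sc_left_unit_def by simp
qed

lemma sc_right_unit_tensor:
  assumes "sc_right_unit A sa ua" "sc_right_unit B sb ub"
  shows "sc_right_unit (A \<times> B) (sc_tensor sa sb) (\<lambda>(p, q). ua p * ub q)"
  unfolding sc_right_unit_def
proof clarify
  fix k1 k2 p1 p2
  assume m: "k1 \<in> A" "k2 \<in> B" "p1 \<in> A" "p2 \<in> B"
  have "(\<Sum>i\<in>A \<times> B. (case i of (p, q) \<Rightarrow> ua p * ub q) * sc_tensor sa sb (k1, k2) i (p1, p2))
     = (\<Sum>i1\<in>A. ua i1 * sa k1 i1 p1) * (\<Sum>i2\<in>B. ub i2 * sb k2 i2 p2)"
    unfolding sum_product_split[symmetric] by (intro sum.cong refl) (auto simp: sc_tensor_def)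
  then show "(\<Sum>i\<in>A \<times> B. (case i of (p, q) \<Rightarrow> ua p * ub q) * sc_tensor sa sb (k1, k2) i (p1, p2))
     = (if (k1, k2) = (p1, p2) then 1 else 0)"
    using assms m unfolding sc_right_unit_def by simp
qed

lemma mul2_eq_mul1_tensor: "mul2 B sc = mul1 (B \<times> B) (sc_tensor sc sc)"
  by (intro ext) (simp add: mul2_def mul1_def sc_tensor_def ext0_def split_def ac_simps)

lemma mul3_eq_mul1_tensor: "mul3 B sc = mul1 (B \<times> B \<times> B) (sc_tensor sc (sc_tensor sc sc))"
  by (intro ext) (simp add: mul3_def mul1_def sc_tensor_def ext0_def split_def ac_simps)

lemma mul4_eq_mul1_tensor: "mul4 B sc = mul1 (B \<times> B \<times> B \<times> B) (sc_tensor sc (sc_tensor sc (sc_tensor sc sc)))"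
  by (intro ext) (simp add: mul4_def mul1_def sc_tensor_def ext0_def split_def ac_simps)

lemma one2_eq_tensor: "one2 un = (\<lambda>(p, q). un p * un q)"
  by (simp add: one2_def)

lemma one3_eq_tensor: "one3 (un :: 'b \<Rightarrow> 'k::comm_semiring_1) = (\<lambda>(p, q). un p * (\<lambda>(p, q). un p * un q) q)"
  by (auto simp: one3_def ac_simps fun_eq_iff)

lemma V2_eq_V1: "V2 B = V1 (B \<times> B)" by (simp add: V2_def V1_def)
lemma V3_eq_V1: "V3 B = V1 (B \<times> B \<times> B)" by (simp add: V3_def V1_def)

lemma inv2_eqI:
  assumes "finite B" "sc_associative B sc" "sc_left_unit B sc un" "sc_right_unit B sc un"
    and "v \<in> V2 B" "mul2 B sc u v = one2 un" "mul2 B sc v u = one2 un"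
  shows "inv2 B sc un u = v"
  unfolding inv2_def
proof (rule the_equality)
  show "v \<in> V2 B \<and> mul2 B sc u v = one2 un \<and> mul2 B sc v u = one2 un" using assms by simp
next
  fix w assume "w \<in> V2 B \<and> mul2 B sc u w = one2 un \<and> mul2 B sc w u = one2 un"
  then show "w = v"
    using assms mul1_inverse_unique[of "B \<times> B" "sc_tensor sc sc" "\<lambda>(p, q). un p * un q" w v u]
    by (simp add: sc_associative_tensor sc_left_unit_tensor sc_right_unit_tensor
        V2_eq_V1 mul2_eq_mul1_tensor one2_eq_tensor)
qed

lemma inv3_eqI:
  assumes "finite B" "sc_associative B sc" "sc_left_unit B sc un" "sc_right_unit B sc un"
    and "v \<in> V3 B" "mul3 B sc u v = one3 un" "mul3 B sc v u = one3 un"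
  shows "inv3 B sc un u = v"
  unfolding inv3_def
proof (rule the_equality)
  show "v \<in> V3 B \<and> mul3 B sc u v = one3 un \<and> mul3 B sc v u = one3 un" using assms by simp
next
  fix w assume "w \<in> V3 B \<and> mul3 B sc u w = one3 un \<and> mul3 B sc w u = one3 un"
  then show "w = v"
    using assms mul1_inverse_unique[of "B \<times> B \<times> B" "sc_tensor sc (sc_tensor sc sc)"
        "\<lambda>(p, q). un p * (\<lambda>(p, q). un p * un q) q" w v u]
    by (simp add: sc_associative_tensor sc_left_unit_tensor sc_right_unit_tensor
        V3_eq_V1 mul3_eq_mul1_tensor one3_eq_tensor)
qed

text \<open>
  \<open>sc_unique_left_factor B sc P pre g\<close>: for fixed right factor \<open>e\<^sub>k\<close>, the basis element \<open>e\<^sub>p\<close>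
  occurs in \<open>e\<^sub>i e\<^sub>k\<close> only if \<open>P k p\<close> and \<open>i = pre k p\<close>, with coefficient \<open>g k p\<close>. This holds
  for \<open>H\<close>, where \<open>(t\<^sub>x g)(t\<^sub>y h)\<close> is a multiple of a single basis element, and passes to
  tensor powers.
\<close>

definition sc_unique_left_factor :: "'b set \<Rightarrow> ('b \<Rightarrow> 'b \<Rightarrow> 'b \<Rightarrow> 'k::field) \<Rightarrow> ('b \<Rightarrow> 'b \<Rightarrow> bool) \<Rightarrow>
    ('b \<Rightarrow> 'b \<Rightarrow> 'b) \<Rightarrow> ('b \<Rightarrow> 'b \<Rightarrow> 'k) \<Rightarrow> bool" where
  "sc_unique_left_factor B sc P pre g \<longleftrightarrow> (\<forall>k\<in>B. \<forall>p\<in>B. \<forall>w.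
     (\<Sum>I\<in>B. w I * sc I k p) = (if P k p then w (pre k p) * g k p else 0))"

lemma sc_unique_left_factor_tensor:
  assumes "sc_unique_left_factor A sa Pa prea ga" "sc_unique_left_factor B sb Pb preb gb"
  shows "sc_unique_left_factor (A \<times> B) (sc_tensor sa sb) (\<lambda>(k1, k2) (p1, p2). Pa k1 p1 \<and> Pb k2 p2)
     (\<lambda>(k1, k2) (p1, p2). (prea k1 p1, preb k2 p2)) (\<lambda>(k1, k2) (p1, p2). ga k1 p1 * gb k2 p2)"
proof -
  have "(\<Sum>I\<in>A \<times> B. w I * sc_tensor sa sb I (k1, k2) (p1, p2)) =
      (if Pa k1 p1 \<and> Pb k2 p2 then w (prea k1 p1, preb k2 p2) * (ga k1 p1 * gb k2 p2) else 0)"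
    if m: "k1 \<in> A" "k2 \<in> B" "p1 \<in> A" "p2 \<in> B" for k1 k2 p1 p2 w
  proof -
    have A: "\<And>w. (\<Sum>I\<in>A. w I * sa I k1 p1) = (if Pa k1 p1 then w (prea k1 p1) * ga k1 p1 else 0)"
     and B: "\<And>w. (\<Sum>I\<in>B. w I * sb I k2 p2) = (if Pb k2 p2 then w (preb k2 p2) * gb k2 p2 else 0)"
      using assms m unfolding sc_unique_left_factor_def by blast+
    have "(\<Sum>I\<in>A \<times> B. w I * sc_tensor sa sb I (k1, k2) (p1, p2))
       = (\<Sum>i1\<in>A. \<Sum>i2\<in>B. w (i1, i2) * (sa i1 k1 p1 * sb i2 k2 p2))"
      by (subst sum.cartesian_product) (auto simp: sc_tensor_def intro!: sum.cong)
    also have "\<dots> = (\<Sum>i1\<in>A. sa i1 k1 p1 * (\<Sum>i2\<in>B. w (i1, i2) * sb i2 k2 p2))"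
      by (simp add: sum_distrib_left ac_simps)
    also have "\<dots> = (\<Sum>i1\<in>A. sa i1 k1 p1 * (if Pb k2 p2 then w (i1, preb k2 p2) * gb k2 p2 else 0))"
      by (simp only: B)
    also have "\<dots> = (if Pb k2 p2 then (\<Sum>i1\<in>A. w (i1, preb k2 p2) * sa i1 k1 p1) * gb k2 p2 else 0)"
      by (simp add: sum_distrib_right sum_distrib_left[symmetric] ac_simps)
    finally show ?thesis by (simp add: A)
  qed
  then show ?thesis unfolding sc_unique_left_factor_def by clarsimp
qed

lemma mul1_by_unique_left_factor:
  assumes "sc_unique_left_factor B sc P pre g" "p \<in> B"
  shows "mul1 B sc u v p = (\<Sum>K\<in>B. v K * (if P K p then u (pre K p) * g K p else 0))"
proof -
  have "mul1 B sc u v p = (\<Sum>I\<in>B. \<Sum>K\<in>B. v K * (u I * sc I K p))"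
    using assms(2) by (simp add: mul1_def ext0_def ac_simps)
  also have "\<dots> = (\<Sum>K\<in>B. v K * (\<Sum>I\<in>B. u I * sc I K p))"
    by (subst sum.swap) (simp add: sum_distrib_left)
  also have "\<dots> = (\<Sum>K\<in>B. v K * (if P K p then u (pre K p) * g K p else 0))"
    using assms unfolding sc_unique_left_factor_def by (intro sum.cong refl) auto
  finally show ?thesis .
qed

section \<open>Crossed modules with a quasi-abelian 3-cocycle\<close>

locale crossed_module_cocycle =
  fixes G :: "'g monoid" and X :: "'x monoid"
    and act :: "'g \<Rightarrow> 'x \<Rightarrow> 'x" and d :: "'x \<Rightarrow> 'g"
    and \<omega> :: "'x \<Rightarrow> 'x \<Rightarrow> 'x \<Rightarrow> 'k::field"
    and \<gamma> :: "'g \<Rightarrow> 'g \<Rightarrow> 'x \<Rightarrow> 'k" and \<mu> :: "'g \<Rightarrow> 'x \<Rightarrow> 'x \<Rightarrow> 'k"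
    and c :: "'x \<Rightarrow> 'x \<Rightarrow> 'k"
  assumes crossed_module: "finite_crossed_module G X act d"
    and cocycle: "quasi_abelian_3_cocycle G X act d \<omega> \<gamma> \<mu> c"
    and normalized: "normalized_cocycle G X \<omega> \<gamma> \<mu> c"
begin

sublocale G: group G using crossed_module by (simp add: finite_crossed_module_def)
sublocale X: group X using crossed_module by (simp add: finite_crossed_module_def)
sublocale d: group_hom X G d
  using crossed_module by (simp add: finite_crossed_module_def group_hom_def group_hom_axioms_def)

abbreviation "GG \<equiv> carrier G"
abbreviation "XX \<equiv> carrier X"
abbreviation "eG \<equiv> \<one>\<^bsub>G\<^esub>"
abbreviation "eX \<equiv> \<one>\<^bsub>X\<^esub>"

lemma finite_G: "finite GG" and finite_X: "finite XX"
  using crossed_module by (auto simp: finite_crossed_module_def)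

lemma act_closed [simp]: "g \<in> GG \<Longrightarrow> x \<in> XX \<Longrightarrow> act g x \<in> XX"
  using crossed_module by (auto simp: finite_crossed_module_def)
lemma act_one [simp]: "x \<in> XX \<Longrightarrow> act eG x = x"
  using crossed_module by (auto simp: finite_crossed_module_def)
lemma act_mult: "g \<in> GG \<Longrightarrow> h \<in> GG \<Longrightarrow> x \<in> XX \<Longrightarrow> act (g \<otimes>\<^bsub>G\<^esub> h) x = act g (act h x)"
  using crossed_module by (auto simp: finite_crossed_module_def)
lemma act_hom [simp]:
  "g \<in> GG \<Longrightarrow> x \<in> XX \<Longrightarrow> y \<in> XX \<Longrightarrow> act g (x \<otimes>\<^bsub>X\<^esub> y) = act g x \<otimes>\<^bsub>X\<^esub> act g y"
  using crossed_module by (auto simp: finite_crossed_module_def)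
lemma act_d: "x \<in> XX \<Longrightarrow> y \<in> XX \<Longrightarrow> act (d x) y = x \<otimes>\<^bsub>X\<^esub> y \<otimes>\<^bsub>X\<^esub> inv\<^bsub>X\<^esub> x"
  using crossed_module by (auto simp: finite_crossed_module_def)
lemma d_act: "g \<in> GG \<Longrightarrow> x \<in> XX \<Longrightarrow> d (act g x) = g \<otimes>\<^bsub>G\<^esub> d x \<otimes>\<^bsub>G\<^esub> inv\<^bsub>G\<^esub> g"
  using crossed_module by (auto simp: finite_crossed_module_def)

lemma act_one_X [simp]: "g \<in> GG \<Longrightarrow> act g eX = eX"
  using act_hom[of g eX eX] by (metis X.l_cancel_one' X.one_closed X.r_one act_closed)

lemma act_inv_X [simp]: "g \<in> GG \<Longrightarrow> x \<in> XX \<Longrightarrow> act g (inv\<^bsub>X\<^esub> x) = inv\<^bsub>X\<^esub> (act g x)"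
  using act_hom[of g "inv\<^bsub>X\<^esub> x" x] by (metis X.inv_closed X.inv_equality X.l_inv act_closed act_one_X)

lemma act_inv_act [simp]: "g \<in> GG \<Longrightarrow> x \<in> XX \<Longrightarrow> act (inv\<^bsub>G\<^esub> g) (act g x) = x"
  and act_act_inv [simp]: "g \<in> GG \<Longrightarrow> x \<in> XX \<Longrightarrow> act g (act (inv\<^bsub>G\<^esub> g) x) = x"
  by (simp_all add: act_mult[symmetric])

lemma act_inj_iff [simp]: "g \<in> GG \<Longrightarrow> a \<in> XX \<Longrightarrow> b \<in> XX \<Longrightarrow> act g a = act g b \<longleftrightarrow> a = b"
  by (metis act_inv_act)

lemma sum_G_mult_right: "k \<in> GG \<Longrightarrow> (\<Sum>h\<in>GG. F (h \<otimes>\<^bsub>G\<^esub> k)) = (\<Sum>h\<in>GG. F h)"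
  by (rule sum.reindex_bij_witness[where i="\<lambda>h. h \<otimes>\<^bsub>G\<^esub> inv\<^bsub>G\<^esub> k" and j="\<lambda>h. h \<otimes>\<^bsub>G\<^esub> k"])
    (auto simp: G.m_assoc)

lemma inv_X_eq_iff: "a \<in> XX \<Longrightarrow> b \<in> XX \<Longrightarrow> inv\<^bsub>X\<^esub> a = b \<longleftrightarrow> a = inv\<^bsub>X\<^esub> b"
  by auto

lemma act_eq_inv_act_iff [simp]:
  "g \<in> GG \<Longrightarrow> a \<in> XX \<Longrightarrow> b \<in> XX \<Longrightarrow> act g a = inv\<^bsub>X\<^esub> (act g b) \<longleftrightarrow> a = inv\<^bsub>X\<^esub> b"
  by (metis act_inv_X act_inj_iff X.inv_closed)

lemma X_inv_cancel [simp]: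
  "x \<in> XX \<Longrightarrow> y \<in> XX \<Longrightarrow> x \<otimes>\<^bsub>X\<^esub> (inv\<^bsub>X\<^esub> x \<otimes>\<^bsub>X\<^esub> y) = y"
  "x \<in> XX \<Longrightarrow> y \<in> XX \<Longrightarrow> inv\<^bsub>X\<^esub> x \<otimes>\<^bsub>X\<^esub> (x \<otimes>\<^bsub>X\<^esub> y) = y"
  by (simp_all add: X.m_assoc[symmetric])
lemma G_inv_cancel [simp]:
  "x \<in> GG \<Longrightarrow> y \<in> GG \<Longrightarrow> x \<otimes>\<^bsub>G\<^esub> (inv\<^bsub>G\<^esub> x \<otimes>\<^bsub>G\<^esub> y) = y"
  "x \<in> GG \<Longrightarrow> y \<in> GG \<Longrightarrow> inv\<^bsub>G\<^esub> x \<otimes>\<^bsub>G\<^esub> (x \<otimes>\<^bsub>G\<^esub> y) = y"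
  by (simp_all add: G.m_assoc[symmetric])

lemma act_d_assoc [simp]: "x \<in> XX \<Longrightarrow> y \<in> XX \<Longrightarrow> act (d x) y = x \<otimes>\<^bsub>X\<^esub> (y \<otimes>\<^bsub>X\<^esub> inv\<^bsub>X\<^esub> x)"
  by (simp add: act_d X.m_assoc)
lemma act_inv_d [simp]: "x \<in> XX \<Longrightarrow> y \<in> XX \<Longrightarrow> act (inv\<^bsub>G\<^esub> (d x)) y = inv\<^bsub>X\<^esub> x \<otimes>\<^bsub>X\<^esub> (y \<otimes>\<^bsub>X\<^esub> x)"
  using act_d[of "inv\<^bsub>X\<^esub> x" y] by (simp add: X.m_assoc)

lemma cocycle_nonzero:
  "x \<in> XX \<Longrightarrow> y \<in> XX \<Longrightarrow> z \<in> XX \<Longrightarrow> \<omega> x y z \<noteq> 0"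
  "g \<in> GG \<Longrightarrow> h \<in> GG \<Longrightarrow> x \<in> XX \<Longrightarrow> \<gamma> g h x \<noteq> 0"
  "g \<in> GG \<Longrightarrow> x \<in> XX \<Longrightarrow> y \<in> XX \<Longrightarrow> \<mu> g x y \<noteq> 0"
  "x \<in> XX \<Longrightarrow> y \<in> XX \<Longrightarrow> c x y \<noteq> 0"
  using cocycle by (auto simp: quasi_abelian_3_cocycle_def)

lemma cocycle_a: "w \<in> XX \<Longrightarrow> x \<in> XX \<Longrightarrow> y \<in> XX \<Longrightarrow> z \<in> XX \<Longrightarrow>
   \<omega> x y z * \<omega> w (x \<otimes>\<^bsub>X\<^esub> y) z * \<omega> w x y = \<omega> w x (y \<otimes>\<^bsub>X\<^esub> z) * \<omega> (w \<otimes>\<^bsub>X\<^esub> x) y z"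
  using cocycle unfolding quasi_abelian_3_cocycle_def by auto
lemma cocycle_b: "g \<in> GG \<Longrightarrow> h \<in> GG \<Longrightarrow> k \<in> GG \<Longrightarrow> x \<in> XX \<Longrightarrow>
   \<gamma> h k x * \<gamma> g (h \<otimes>\<^bsub>G\<^esub> k) x = \<gamma> (g \<otimes>\<^bsub>G\<^esub> h) k x * \<gamma> g h (act k x)"
  using cocycle unfolding quasi_abelian_3_cocycle_def by auto
lemma cocycle_c: "g \<in> GG \<Longrightarrow> x \<in> XX \<Longrightarrow> y \<in> XX \<Longrightarrow> z \<in> XX \<Longrightarrow>
   (\<mu> g y z * \<mu> g x (y \<otimes>\<^bsub>X\<^esub> z)) / (\<mu> g (x \<otimes>\<^bsub>X\<^esub> y) z * \<mu> g x y)
     = \<omega> (act g x) (act g y) (act g z) / \<omega> x y z"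
  using cocycle unfolding quasi_abelian_3_cocycle_def by auto
lemma cocycle_d: "g \<in> GG \<Longrightarrow> h \<in> GG \<Longrightarrow> x \<in> XX \<Longrightarrow> y \<in> XX \<Longrightarrow>
   (\<gamma> g h x * \<gamma> g h y) / \<gamma> g h (x \<otimes>\<^bsub>X\<^esub> y)
     = (\<mu> g (act h x) (act h y) * \<mu> h x y) / \<mu> (g \<otimes>\<^bsub>G\<^esub> h) x y"
  using cocycle unfolding quasi_abelian_3_cocycle_def by auto
lemma cocycle_e: "g \<in> GG \<Longrightarrow> x \<in> XX \<Longrightarrow> y \<in> XX \<Longrightarrow>
   c (act g x) (act g y) / c x y
     = (\<mu> g (x \<otimes>\<^bsub>X\<^esub> y \<otimes>\<^bsub>X\<^esub> inv\<^bsub>X\<^esub> x) x / \<mu> g x y) *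
       (\<gamma> (g \<otimes>\<^bsub>G\<^esub> d x \<otimes>\<^bsub>G\<^esub> inv\<^bsub>G\<^esub> g) g y / \<gamma> g (d x) y)"
  using cocycle unfolding quasi_abelian_3_cocycle_def by auto
lemma cocycle_f: "x \<in> XX \<Longrightarrow> y \<in> XX \<Longrightarrow> z \<in> XX \<Longrightarrow>
   c (x \<otimes>\<^bsub>X\<^esub> y) z
     = (\<omega> x y z * \<omega> ((x \<otimes>\<^bsub>X\<^esub> y) \<otimes>\<^bsub>X\<^esub> z \<otimes>\<^bsub>X\<^esub> inv\<^bsub>X\<^esub> (x \<otimes>\<^bsub>X\<^esub> y)) x y)
       / (\<omega> x (y \<otimes>\<^bsub>X\<^esub> z \<otimes>\<^bsub>X\<^esub> inv\<^bsub>X\<^esub> y) y * \<gamma> (d x) (d y) z)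
       * c x (y \<otimes>\<^bsub>X\<^esub> z \<otimes>\<^bsub>X\<^esub> inv\<^bsub>X\<^esub> y) * c y z"
  using cocycle unfolding quasi_abelian_3_cocycle_def by auto
lemma cocycle_g: "x \<in> XX \<Longrightarrow> y \<in> XX \<Longrightarrow> z \<in> XX \<Longrightarrow>
   c x (y \<otimes>\<^bsub>X\<^esub> z)
     = \<omega> (x \<otimes>\<^bsub>X\<^esub> y \<otimes>\<^bsub>X\<^esub> inv\<^bsub>X\<^esub> x) x z
       / (\<omega> x y z * \<omega> (x \<otimes>\<^bsub>X\<^esub> y \<otimes>\<^bsub>X\<^esub> inv\<^bsub>X\<^esub> x) (x \<otimes>\<^bsub>X\<^esub> z \<otimes>\<^bsub>X\<^esub> inv\<^bsub>X\<^esub> x) x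
          * \<mu> (d x) y z)
       * c x y * c x z"
  using cocycle unfolding quasi_abelian_3_cocycle_def by auto

lemma cocycle_normalized [simp]:
  "y \<in> XX \<Longrightarrow> z \<in> XX \<Longrightarrow> \<omega> eX y z = 1"
  "x \<in> XX \<Longrightarrow> z \<in> XX \<Longrightarrow> \<omega> x eX z = 1"
  "x \<in> XX \<Longrightarrow> y \<in> XX \<Longrightarrow> \<omega> x y eX = 1"
  "h \<in> GG \<Longrightarrow> x \<in> XX \<Longrightarrow> \<gamma> eG h x = 1"
  "g \<in> GG \<Longrightarrow> x \<in> XX \<Longrightarrow> \<gamma> g eG x = 1"
  "g \<in> GG \<Longrightarrow> h \<in> GG \<Longrightarrow> \<gamma> g h eX = 1"
  "x \<in> XX \<Longrightarrow> y \<in> XX \<Longrightarrow> \<mu> eG x y = 1"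
  "g \<in> GG \<Longrightarrow> y \<in> XX \<Longrightarrow> \<mu> g eX y = 1"
  "g \<in> GG \<Longrightarrow> x \<in> XX \<Longrightarrow> \<mu> g x eX = 1"
  "y \<in> XX \<Longrightarrow> c eX y = 1"
  "x \<in> XX \<Longrightarrow> c x eX = 1"
  using normalized X.one_closed G.one_closed unfolding normalized_cocycle_def by metis+

lemma gamma_inv_swap: "g \<in> GG \<Longrightarrow> x \<in> XX \<Longrightarrow> \<gamma> (inv\<^bsub>G\<^esub> g) g x = \<gamma> g (inv\<^bsub>G\<^esub> g) (act g x)"
  using cocycle_b[of g "inv\<^bsub>G\<^esub> g" g x] normalized unfolding normalized_cocycle_def by simp

lemma cocycle_d_rearranged:
  assumes "g \<in> GG" "k \<in> GG" "x \<in> XX" "y \<in> XX"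
  shows "inverse (\<gamma> (g \<otimes>\<^bsub>G\<^esub> inv\<^bsub>G\<^esub> k) k (x \<otimes>\<^bsub>X\<^esub> y)) * \<mu> g x y =
    \<mu> (g \<otimes>\<^bsub>G\<^esub> inv\<^bsub>G\<^esub> k) (act k x) (act k y) * \<mu> k x y *
    (inverse (\<gamma> (g \<otimes>\<^bsub>G\<^esub> inv\<^bsub>G\<^esub> k) k x) * inverse (\<gamma> (g \<otimes>\<^bsub>G\<^esub> inv\<^bsub>G\<^esub> k) k y))"
proof -
  have gk: "g \<otimes>\<^bsub>G\<^esub> inv\<^bsub>G\<^esub> k \<in> GG" using assms by simp
  have e: "g \<otimes>\<^bsub>G\<^esub> inv\<^bsub>G\<^esub> k \<otimes>\<^bsub>G\<^esub> k = g" using assms by (simp add: G.m_assoc)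
  have D: "(\<gamma> (g \<otimes>\<^bsub>G\<^esub> inv\<^bsub>G\<^esub> k) k x * \<gamma> (g \<otimes>\<^bsub>G\<^esub> inv\<^bsub>G\<^esub> k) k y) / \<gamma> (g \<otimes>\<^bsub>G\<^esub> inv\<^bsub>G\<^esub> k) k (x \<otimes>\<^bsub>X\<^esub> y)
        = (\<mu> (g \<otimes>\<^bsub>G\<^esub> inv\<^bsub>G\<^esub> k) (act k x) (act k y) * \<mu> k x y) / \<mu> g x y"
    using cocycle_d[OF gk assms(2-4)] by (simp add: e)
  have nz: "\<gamma> (g \<otimes>\<^bsub>G\<^esub> inv\<^bsub>G\<^esub> k) k x \<noteq> 0" "\<gamma> (g \<otimes>\<^bsub>G\<^esub> inv\<^bsub>G\<^esub> k) k y \<noteq> 0"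
     "\<gamma> (g \<otimes>\<^bsub>G\<^esub> inv\<^bsub>G\<^esub> k) k (x \<otimes>\<^bsub>X\<^esub> y) \<noteq> 0" "\<mu> g x y \<noteq> 0"
    using assms gk by (simp_all add: cocycle_nonzero)
  show ?thesis using D nz by (simp add: field_simps)
qed

lemma cocycle_c_rearranged:
  assumes "g \<in> GG" "x \<in> XX" "y \<in> XX" "z \<in> XX"
  shows "\<mu> g y z * \<mu> g x (y \<otimes>\<^bsub>X\<^esub> z) =
    inverse (\<omega> x y z) * (\<omega> (act g x) (act g y) (act g z) * (\<mu> g (x \<otimes>\<^bsub>X\<^esub> y) z * \<mu> g x y))"
proof -
  have nz: "\<mu> g (x \<otimes>\<^bsub>X\<^esub> y) z \<noteq> 0" "\<mu> g x y \<noteq> 0" "\<omega> x y z \<noteq> 0"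
    using assms by (simp_all add: cocycle_nonzero)
  show ?thesis using cocycle_c[OF assms] nz by (simp add: field_simps)
qed

lemma cocycle_e_rearranged:
  assumes g: "g \<in> GG" and x: "x \<in> XX" and y: "y \<in> XX"
  shows "c (act g x) (act g y) * \<mu> g x y * inverse (\<gamma> (g \<otimes>\<^bsub>G\<^esub> d x \<otimes>\<^bsub>G\<^esub> inv\<^bsub>G\<^esub> g) g y) =
         c x y * \<mu> g (x \<otimes>\<^bsub>X\<^esub> y \<otimes>\<^bsub>X\<^esub> inv\<^bsub>X\<^esub> x) x * inverse (\<gamma> g (d x) y)"
proof -
  have nz: "c x y \<noteq> 0" "\<mu> g x y \<noteq> 0" "\<gamma> g (d x) y \<noteq> 0" "\<gamma> (g \<otimes>\<^bsub>G\<^esub> d x \<otimes>\<^bsub>G\<^esub> inv\<^bsub>G\<^esub> g) g y \<noteq> 0"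
    using g x y by (simp_all add: cocycle_nonzero)
  show ?thesis using cocycle_e[OF g x y] nz by (simp add: field_simps)
qed

lemma cocycle_d_inverse_pair:
  assumes "g \<in> GG" "h \<in> GG" "y \<in> XX"
  shows "\<gamma> g h (inv\<^bsub>X\<^esub> y) * \<gamma> g h y * \<mu> (g \<otimes>\<^bsub>G\<^esub> h) (inv\<^bsub>X\<^esub> y) y =
    \<mu> g (inv\<^bsub>X\<^esub> (act h y)) (act h y) * \<mu> h (inv\<^bsub>X\<^esub> y) y"
  using cocycle_d[of g h "inv\<^bsub>X\<^esub> y" y] cocycle_nonzero(3)[of "g \<otimes>\<^bsub>G\<^esub> h" "inv\<^bsub>X\<^esub> y" y] assms
  by (simp add: field_simps)

lemma cocycle_b_antipode:
  assumes a: "a \<in> GG" and b: "b \<in> GG" and y: "y \<in> XX"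
  defines "g' \<equiv> inv\<^bsub>G\<^esub> a \<otimes>\<^bsub>G\<^esub> inv\<^bsub>G\<^esub> b"
  shows "\<gamma> g' b (act a y) * \<gamma> a (inv\<^bsub>G\<^esub> a) (act a y) * \<gamma> (inv\<^bsub>G\<^esub> b) (b \<otimes>\<^bsub>G\<^esub> a) y =
    \<gamma> (inv\<^bsub>G\<^esub> b) b (act a y) * \<gamma> (b \<otimes>\<^bsub>G\<^esub> a) g' (act b (act a y))"
proof -
  have g': "g' \<in> GG" using a b by (simp add: g'_def)
  have g'b: "g' \<otimes>\<^bsub>G\<^esub> b = inv\<^bsub>G\<^esub> a" and ag': "a \<otimes>\<^bsub>G\<^esub> g' = inv\<^bsub>G\<^esub> b"
    using a b by (simp_all add: g'_def G.m_assoc[symmetric]) (simp add: G.m_assoc)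
  then have F3: "\<gamma> g' b (act a y) * \<gamma> a (inv\<^bsub>G\<^esub> a) (act a y) = \<gamma> (inv\<^bsub>G\<^esub> b) b (act a y) * \<gamma> a g' (act b (act a y))"
    using cocycle_b[of a g' b "act a y"] a b y g' by simp
  have "b \<otimes>\<^bsub>G\<^esub> a \<otimes>\<^bsub>G\<^esub> g' = eG"
    using a b unfolding g'_def by (metis G.inv_mult_group G.m_closed G.r_inv)
  moreover have "inv\<^bsub>G\<^esub> b \<otimes>\<^bsub>G\<^esub> (b \<otimes>\<^bsub>G\<^esub> a) = a"
    using a b by (simp add: G.m_assoc[symmetric])
  moreover have "act g' (act b (act a y)) = y"
    using a b y g' by (simp add: act_mult[symmetric] G.m_assoc[symmetric] g'b)
  ultimately have F2: "\<gamma> (b \<otimes>\<^bsub>G\<^esub> a) g' (act b (act a y)) = \<gamma> a g' (act b (act a y)) * \<gamma> (inv\<^bsub>G\<^esub> b) (b \<otimes>\<^bsub>G\<^esub> a) y"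
    using cocycle_b[of "inv\<^bsub>G\<^esub> b" "b \<otimes>\<^bsub>G\<^esub> a" g' "act b (act a y)"] a b y g' by simp
  show ?thesis unfolding F2 F3 by (simp add: ac_simps)
qed

lemma omega_inverse_pair: "w \<in> XX \<Longrightarrow> \<omega> w (inv\<^bsub>X\<^esub> w) w * \<omega> (inv\<^bsub>X\<^esub> w) w (inv\<^bsub>X\<^esub> w) = 1"
  using cocycle_a[of w "inv\<^bsub>X\<^esub> w" w "inv\<^bsub>X\<^esub> w"] by (simp add: ac_simps)

section \<open>The algebra \<open>H(\<omega>, \<gamma>, \<mu>, c)\<close> and its graph vectors\<close>

abbreviation "Hb \<equiv> H_basis G X"
abbreviation "Hsc \<equiv> H_sc G X act \<gamma>"
abbreviation "Hun \<equiv> H_unit G X"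
abbreviation "Hdc \<equiv> H_dc G X \<mu>"
abbreviation "Hep \<equiv> H_ep G X"
abbreviation "Hsm \<equiv> H_sm G X act \<gamma> \<mu>"
abbreviation "HPhi \<equiv> H_Phi G X \<omega>"
abbreviation "Hbeta \<equiv> H_beta G X \<omega>"
abbreviation "HR \<equiv> H_R G X d c"

lemma Hb_eq: "Hb = XX \<times> GG" by (simp add: H_basis_def)
lemma mem_Hb [simp]: "(x, g) \<in> Hb \<longleftrightarrow> x \<in> XX \<and> g \<in> GG" by (simp add: Hb_eq)
lemma finite_Hb: "finite Hb" using finite_G finite_X by (simp add: Hb_eq)

lemma sum_Hb: "(\<Sum>i\<in>Hb. f i) = (\<Sum>x\<in>XX. \<Sum>g\<in>GG. f (x, g))"
  by (simp add: Hb_eq sum.cartesian_product)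

definition H_left_factor :: "'x \<times> 'g \<Rightarrow> 'x \<times> 'g \<Rightarrow> 'x \<times> 'g" where
  "H_left_factor k p = (act (snd k) (fst p), snd p \<otimes>\<^bsub>G\<^esub> inv\<^bsub>G\<^esub> snd k)"
definition H_left_coeff :: "'x \<times> 'g \<Rightarrow> 'x \<times> 'g \<Rightarrow> 'k" where
  "H_left_coeff k p = inverse (\<gamma> (snd p \<otimes>\<^bsub>G\<^esub> inv\<^bsub>G\<^esub> snd k) (snd k) (fst p))"

lemma H_sc_unique_left_factor:
  "sc_unique_left_factor Hb Hsc (\<lambda>k p. fst k = fst p) H_left_factor H_left_coeff"
  unfolding sc_unique_left_factor_def
proof clarify
  fix y h z m w
  assume "(y, h) \<in> Hb" "(z, m) \<in> Hb"
  then have m: "y \<in> XX" "h \<in> GG" "z \<in> XX" "m \<in> GG" by auto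
  let ?t = "H_left_factor (y, h) (z, m)"
  have sc: "w I * Hsc I (y, h) (z, m) = (if I = ?t \<and> y = z then w ?t * H_left_coeff (y, h) (z, m) else 0)"
    if "I \<in> Hb" for I
  proof -
    obtain x g where I: "I = (x, g)" "x \<in> XX" "g \<in> GG" using \<open>I \<in> Hb\<close> by (cases I) auto
    have "m = g \<otimes>\<^bsub>G\<^esub> h \<longleftrightarrow> g = m \<otimes>\<^bsub>G\<^esub> inv\<^bsub>G\<^esub> h" using I m by (metis G.inv_solve_right)
    then show ?thesis using I by (auto simp: H_sc_def H_left_factor_def H_left_coeff_def)
  qed
  show "(\<Sum>I\<in>Hb. w I * Hsc I (y, h) (z, m)) =
      (if fst (y, h) = fst (z, m) then w ?t * H_left_coeff (y, h) (z, m) else 0)"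
  proof (cases "y = z")
    case True
    then show ?thesis
      using m sc finite_Hb by (subst sum_eq_single[where t="?t"]) (auto simp: H_left_factor_def)
  qed (simp add: sc)
qed

lemma mul1_H_apply:
  assumes "z \<in> XX" "m \<in> GG"
  shows "mul1 Hb Hsc u v (z, m) = (\<Sum>h\<in>GG. v (z, h) *
     (u (act h z, m \<otimes>\<^bsub>G\<^esub> inv\<^bsub>G\<^esub> h) * inverse (\<gamma> (m \<otimes>\<^bsub>G\<^esub> inv\<^bsub>G\<^esub> h) h z)))"
proof -
  let ?f = "\<lambda>K. v K * (if fst K = z then u (H_left_factor K (z, m)) * H_left_coeff K (z, m) else 0)"
  have "mul1 Hb Hsc u v (z, m) = (\<Sum>K\<in>Hb. ?f K)"
    using assms by (simp add: mul1_by_unique_left_factor[OF H_sc_unique_left_factor])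
  also have "\<dots> = (\<Sum>h\<in>GG. ?f (z, h))"
    by (rule sum_over_image_support[where \<phi>="\<lambda>h. (z, h)", unfolded comp_def])
      (use assms finite_Hb in \<open>auto simp: inj_on_def\<close>)
  finally show ?thesis by (simp add: H_left_factor_def H_left_coeff_def)
qed

lemmas H_sc2_unique_left_factor =
  sc_unique_left_factor_tensor[OF H_sc_unique_left_factor H_sc_unique_left_factor]
lemmas H_sc3_unique_left_factor =
  sc_unique_left_factor_tensor[OF H_sc_unique_left_factor H_sc2_unique_left_factor]

lemma mul2_H_apply:
  assumes "z1 \<in> XX" "m1 \<in> GG" "z2 \<in> XX" "m2 \<in> GG"
  shows "mul2 Hb Hsc u v ((z1, m1), (z2, m2)) = (\<Sum>(h1, h2)\<in>GG \<times> GG. v ((z1, h1), (z2, h2)) *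
     (u ((act h1 z1, m1 \<otimes>\<^bsub>G\<^esub> inv\<^bsub>G\<^esub> h1), (act h2 z2, m2 \<otimes>\<^bsub>G\<^esub> inv\<^bsub>G\<^esub> h2)) *
      (inverse (\<gamma> (m1 \<otimes>\<^bsub>G\<^esub> inv\<^bsub>G\<^esub> h1) h1 z1) * inverse (\<gamma> (m2 \<otimes>\<^bsub>G\<^esub> inv\<^bsub>G\<^esub> h2) h2 z2))))"
  using assms finite_Hb unfolding mul2_eq_mul1_tensor
  by (subst mul1_by_unique_left_factor[OF H_sc2_unique_left_factor], simp,
      subst sum_over_image_support[where \<phi>="\<lambda>(h1, h2). ((z1, h1), (z2, h2))" and A="GG \<times> GG"])
    (auto simp: inj_on_def H_left_factor_def H_left_coeff_def split_def image_iff)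

lemma mul3_H_apply:
  assumes "z1 \<in> XX" "m1 \<in> GG" "z2 \<in> XX" "m2 \<in> GG" "z3 \<in> XX" "m3 \<in> GG"
  shows "mul3 Hb Hsc u v ((z1, m1), (z2, m2), (z3, m3)) = (\<Sum>(h1, h2, h3)\<in>GG \<times> GG \<times> GG. v ((z1, h1), (z2, h2), (z3, h3)) *
     (u ((act h1 z1, m1 \<otimes>\<^bsub>G\<^esub> inv\<^bsub>G\<^esub> h1), (act h2 z2, m2 \<otimes>\<^bsub>G\<^esub> inv\<^bsub>G\<^esub> h2), (act h3 z3, m3 \<otimes>\<^bsub>G\<^esub> inv\<^bsub>G\<^esub> h3)) *
      (inverse (\<gamma> (m1 \<otimes>\<^bsub>G\<^esub> inv\<^bsub>G\<^esub> h1) h1 z1) * (inverse (\<gamma> (m2 \<otimes>\<^bsub>G\<^esub> inv\<^bsub>G\<^esub> h2) h2 z2) *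
       inverse (\<gamma> (m3 \<otimes>\<^bsub>G\<^esub> inv\<^bsub>G\<^esub> h3) h3 z3)))))"
  using assms finite_Hb unfolding mul3_eq_mul1_tensor
  by (subst mul1_by_unique_left_factor[OF H_sc3_unique_left_factor], simp,
      subst sum_over_image_support[where \<phi>="\<lambda>(h1, h2, h3). ((z1, h1), (z2, h2), (z3, h3))" and A="GG \<times> GG \<times> GG"])
    (auto simp: inj_on_def H_left_factor_def H_left_coeff_def split_def image_iff)

lemma mul4_H_apply:
  assumes "z1 \<in> XX" "m1 \<in> GG" "z2 \<in> XX" "m2 \<in> GG" "z3 \<in> XX" "m3 \<in> GG" "z4 \<in> XX" "m4 \<in> GG"
  shows "mul4 Hb Hsc u v ((z1, m1), (z2, m2), (z3, m3), (z4, m4)) = (\<Sum>(h1, h2, h3, h4)\<in>GG \<times> GG \<times> GG \<times> GG. v ((z1, h1), (z2, h2), (z3, h3), (z4, h4)) *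
     (u ((act h1 z1, m1 \<otimes>\<^bsub>G\<^esub> inv\<^bsub>G\<^esub> h1), (act h2 z2, m2 \<otimes>\<^bsub>G\<^esub> inv\<^bsub>G\<^esub> h2), (act h3 z3, m3 \<otimes>\<^bsub>G\<^esub> inv\<^bsub>G\<^esub> h3), (act h4 z4, m4 \<otimes>\<^bsub>G\<^esub> inv\<^bsub>G\<^esub> h4)) *
      (inverse (\<gamma> (m1 \<otimes>\<^bsub>G\<^esub> inv\<^bsub>G\<^esub> h1) h1 z1) * (inverse (\<gamma> (m2 \<otimes>\<^bsub>G\<^esub> inv\<^bsub>G\<^esub> h2) h2 z2) *
       (inverse (\<gamma> (m3 \<otimes>\<^bsub>G\<^esub> inv\<^bsub>G\<^esub> h3) h3 z3) * inverse (\<gamma> (m4 \<otimes>\<^bsub>G\<^esub> inv\<^bsub>G\<^esub> h4) h4 z4))))))"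
  using assms finite_Hb unfolding mul4_eq_mul1_tensor
  by (subst mul1_by_unique_left_factor[OF sc_unique_left_factor_tensor[OF H_sc_unique_left_factor H_sc3_unique_left_factor]], simp,
      subst sum_over_image_support[where \<phi>="\<lambda>(h1, h2, h3, h4). ((z1, h1), (z2, h2), (z3, h3), (z4, h4))" and A="GG \<times> GG \<times> GG \<times> GG"])
    (auto simp: inj_on_def H_left_factor_def H_left_coeff_def split_def image_iff)

definition gvec1 :: "('x \<Rightarrow> 'k) \<Rightarrow> ('x \<Rightarrow> 'g) \<Rightarrow> 'x \<times> 'g \<Rightarrow> 'k" where
  "gvec1 cf f = ext0 Hb (\<lambda>(x, g). if g = f x then cf x else 0)"
definition gvec2 :: "('x \<times> 'x \<Rightarrow> 'k) \<Rightarrow> ('x \<times> 'x \<Rightarrow> 'g) \<Rightarrow> ('x \<times> 'x \<Rightarrow> 'g) \<Rightarrow> ('x \<times> 'g) \<times> ('x \<times> 'g) \<Rightarrow> 'k" where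
  "gvec2 cf f1 f2 = ext0 (Hb \<times> Hb) (\<lambda>((x, g), (y, h)). if g = f1 (x, y) \<and> h = f2 (x, y) then cf (x, y) else 0)"
definition gvec3 :: "('x \<times> 'x \<times> 'x \<Rightarrow> 'k) \<Rightarrow> ('x \<times> 'x \<times> 'x \<Rightarrow> 'g) \<Rightarrow> ('x \<times> 'x \<times> 'x \<Rightarrow> 'g) \<Rightarrow> ('x \<times> 'x \<times> 'x \<Rightarrow> 'g) \<Rightarrow>
    ('x \<times> 'g) \<times> ('x \<times> 'g) \<times> ('x \<times> 'g) \<Rightarrow> 'k" where
  "gvec3 cf f1 f2 f3 = ext0 (Hb \<times> Hb \<times> Hb) (\<lambda>((x, g), (y, h), (z, k)).
     if g = f1 (x, y, z) \<and> h = f2 (x, y, z) \<and> k = f3 (x, y, z) then cf (x, y, z) else 0)"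
definition evec4 :: "('x \<times> 'x \<times> 'x \<times> 'x \<Rightarrow> 'k) \<Rightarrow> ('x \<times> 'g) \<times> ('x \<times> 'g) \<times> ('x \<times> 'g) \<times> ('x \<times> 'g) \<Rightarrow> 'k" where
  "evec4 cf = ext0 (Hb \<times> Hb \<times> Hb \<times> Hb) (\<lambda>((x, g), (y, h), (z, k), (w, l)).
     if g = eG \<and> h = eG \<and> k = eG \<and> l = eG then cf (x, y, z, w) else 0)"

lemma gvec1_apply: "gvec1 cf f (x, g) = (if x \<in> XX \<and> g \<in> GG \<and> g = f x then cf x else 0)"
  by (auto simp: gvec1_def ext0_def Hb_eq)
lemma gvec2_apply: "gvec2 cf f1 f2 ((x, g), (y, h)) =
   (if x \<in> XX \<and> g \<in> GG \<and> y \<in> XX \<and> h \<in> GG \<and> g = f1 (x, y) \<and> h = f2 (x, y) then cf (x, y) else 0)"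
  by (auto simp: gvec2_def ext0_def Hb_eq)
lemma gvec3_apply: "gvec3 cf f1 f2 f3 ((x, g), (y, h), (z, k)) =
   (if x \<in> XX \<and> g \<in> GG \<and> y \<in> XX \<and> h \<in> GG \<and> z \<in> XX \<and> k \<in> GG \<and>
       g = f1 (x, y, z) \<and> h = f2 (x, y, z) \<and> k = f3 (x, y, z) then cf (x, y, z) else 0)"
  by (auto simp: gvec3_def ext0_def Hb_eq)
lemma evec4_apply: "evec4 cf ((x, g), (y, h), (z, k), (w, l)) =
   (if x \<in> XX \<and> g \<in> GG \<and> y \<in> XX \<and> h \<in> GG \<and> z \<in> XX \<and> k \<in> GG \<and> w \<in> XX \<and> l \<in> GG \<and>
       g = eG \<and> h = eG \<and> k = eG \<and> l = eG then cf (x, y, z, w) else 0)"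
  by (auto simp: evec4_def ext0_def Hb_eq)

lemma mul1_gvec_right:
  assumes "z \<in> XX" "m \<in> GG" "f z = k" "k \<in> GG"
  shows "mul1 Hb Hsc W (gvec1 df f) (z, m) = df z * (W (act k z, m \<otimes>\<^bsub>G\<^esub> inv\<^bsub>G\<^esub> k) *
      inverse (\<gamma> (m \<otimes>\<^bsub>G\<^esub> inv\<^bsub>G\<^esub> k) k z))"
  unfolding mul1_H_apply[OF assms(1,2)]
  by (subst sum_eq_single[where t=k]) (use assms finite_G in \<open>auto simp: gvec1_apply split: if_splits\<close>)

lemma mul2_gvec_right:
  assumes "z1 \<in> XX" "m1 \<in> GG" "z2 \<in> XX" "m2 \<in> GG" "f1 (z1, z2) = k1" "k1 \<in> GG" "f2 (z1, z2) = k2" "k2 \<in> GG"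
  shows "mul2 Hb Hsc W (gvec2 df f1 f2) ((z1, m1), (z2, m2)) = df (z1, z2) *
      (W ((act k1 z1, m1 \<otimes>\<^bsub>G\<^esub> inv\<^bsub>G\<^esub> k1), (act k2 z2, m2 \<otimes>\<^bsub>G\<^esub> inv\<^bsub>G\<^esub> k2)) *
      (inverse (\<gamma> (m1 \<otimes>\<^bsub>G\<^esub> inv\<^bsub>G\<^esub> k1) k1 z1) * inverse (\<gamma> (m2 \<otimes>\<^bsub>G\<^esub> inv\<^bsub>G\<^esub> k2) k2 z2)))"
  unfolding mul2_H_apply[OF assms(1-4)]
  by (subst sum_eq_single[where t="(k1, k2)"]) (use assms finite_G in \<open>auto simp: gvec2_apply split: if_splits\<close>)

lemma mul3_gvec_right:
  assumes "z1 \<in> XX" "m1 \<in> GG" "z2 \<in> XX" "m2 \<in> GG" "z3 \<in> XX" "m3 \<in> GG"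
    "f1 (z1, z2, z3) = k1" "k1 \<in> GG" "f2 (z1, z2, z3) = k2" "k2 \<in> GG" "f3 (z1, z2, z3) = k3" "k3 \<in> GG"
  shows "mul3 Hb Hsc W (gvec3 df f1 f2 f3) ((z1, m1), (z2, m2), (z3, m3)) = df (z1, z2, z3) *
      (W ((act k1 z1, m1 \<otimes>\<^bsub>G\<^esub> inv\<^bsub>G\<^esub> k1), (act k2 z2, m2 \<otimes>\<^bsub>G\<^esub> inv\<^bsub>G\<^esub> k2), (act k3 z3, m3 \<otimes>\<^bsub>G\<^esub> inv\<^bsub>G\<^esub> k3)) *
      (inverse (\<gamma> (m1 \<otimes>\<^bsub>G\<^esub> inv\<^bsub>G\<^esub> k1) k1 z1) * (inverse (\<gamma> (m2 \<otimes>\<^bsub>G\<^esub> inv\<^bsub>G\<^esub> k2) k2 z2) *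
       inverse (\<gamma> (m3 \<otimes>\<^bsub>G\<^esub> inv\<^bsub>G\<^esub> k3) k3 z3))))"
  unfolding mul3_H_apply[OF assms(1-6)]
  by (subst sum_eq_single[where t="(k1, k2, k3)"]) (use assms finite_G in \<open>auto simp: gvec3_apply split: if_splits\<close>)

lemma mul4_gvec_right:
  assumes "z1 \<in> XX" "m1 \<in> GG" "z2 \<in> XX" "m2 \<in> GG" "z3 \<in> XX" "m3 \<in> GG" "z4 \<in> XX" "m4 \<in> GG"
  shows "mul4 Hb Hsc W (evec4 df) ((z1, m1), (z2, m2), (z3, m3), (z4, m4)) = df (z1, z2, z3, z4) *
      W ((z1, m1), (z2, m2), (z3, m3), (z4, m4))"
  unfolding mul4_H_apply[OF assms(1-8)]
  by (subst sum_eq_single[where t="(eG, eG, eG, eG)"]) (use assms finite_G in \<open>auto simp: evec4_apply split: if_splits\<close>)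

lemma mul3_gvec_e_left:
  assumes "z1 \<in> XX" "m1 \<in> GG" "z2 \<in> XX" "m2 \<in> GG" "z3 \<in> XX" "m3 \<in> GG"
  shows "mul3 Hb Hsc (gvec3 cf (\<lambda>_. eG) (\<lambda>_. eG) (\<lambda>_. eG)) W ((z1, m1), (z2, m2), (z3, m3)) =
      cf (act m1 z1, act m2 z2, act m3 z3) * W ((z1, m1), (z2, m2), (z3, m3))"
  unfolding mul3_H_apply[OF assms(1-6)]
  by (subst sum_eq_single[where t="(m1, m2, m3)"]) (use assms finite_G in \<open>auto simp: gvec3_apply G.inv_solve_right' split: if_splits\<close>)

lemma mul1_outside: "P \<notin> Hb \<Longrightarrow> mul1 Hb Hsc u v P = 0" by (simp add: mul1_def ext0_def)
lemma mul2_outside: "P \<notin> Hb \<times> Hb \<Longrightarrow> mul2 Hb Hsc u v P = 0" by (auto simp: mul2_def ext0_def)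
lemma mul3_outside: "P \<notin> Hb \<times> Hb \<times> Hb \<Longrightarrow> mul3 Hb Hsc u v P = 0" by (auto simp: mul3_def ext0_def)
lemma mul4_outside: "P \<notin> Hb \<times> Hb \<times> Hb \<times> Hb \<Longrightarrow> mul4 Hb Hsc u v P = 0" by (auto simp: mul4_def ext0_def)

lemma gvec1_mul:
  assumes "\<And>z. z \<in> XX \<Longrightarrow> f z \<in> GG" "\<And>z. z \<in> XX \<Longrightarrow> h z \<in> GG"
  shows "mul1 Hb Hsc (gvec1 cf f) (gvec1 df h) = gvec1
     (\<lambda>z. cf (act (h z) z) * df z * inverse (\<gamma> (f (act (h z) z)) (h z) z))
     (\<lambda>z. f (act (h z) z) \<otimes>\<^bsub>G\<^esub> h z)"
proof
  fix P :: "'x \<times> 'g"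
  obtain z m where P: "P = (z, m)" by (cases P)
  show "mul1 Hb Hsc (gvec1 cf f) (gvec1 df h) P = gvec1 (\<lambda>z. cf (act (h z) z) * df z * inverse (\<gamma> (f (act (h z) z)) (h z) z))
     (\<lambda>z. f (act (h z) z) \<otimes>\<^bsub>G\<^esub> h z) P"
  proof (cases "z \<in> XX \<and> m \<in> GG")
    case True
    then show ?thesis unfolding P using assms
      by (subst mul1_gvec_right[OF _ _ refl]) (auto simp: gvec1_apply G.inv_solve_right' G.m_assoc)
  next
    case False thus ?thesis unfolding P by (subst mul1_outside) (auto simp: Hb_eq gvec1_apply)
  qed
qed

lemma gvec2_mul:
  assumes "\<And>z. z \<in> XX \<times> XX \<Longrightarrow> f1 z \<in> GG" "\<And>z. z \<in> XX \<times> XX \<Longrightarrow> f2 z \<in> GG"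
     "\<And>z. z \<in> XX \<times> XX \<Longrightarrow> h1 z \<in> GG" "\<And>z. z \<in> XX \<times> XX \<Longrightarrow> h2 z \<in> GG"
  shows "mul2 Hb Hsc (gvec2 cf f1 f2) (gvec2 df h1 h2) = gvec2
     (\<lambda>z. cf (act (h1 z) (fst z), act (h2 z) (snd z)) * df z *
        (inverse (\<gamma> (f1 (act (h1 z) (fst z), act (h2 z) (snd z))) (h1 z) (fst z)) *
         inverse (\<gamma> (f2 (act (h1 z) (fst z), act (h2 z) (snd z))) (h2 z) (snd z))))
     (\<lambda>z. f1 (act (h1 z) (fst z), act (h2 z) (snd z)) \<otimes>\<^bsub>G\<^esub> h1 z)
     (\<lambda>z. f2 (act (h1 z) (fst z), act (h2 z) (snd z)) \<otimes>\<^bsub>G\<^esub> h2 z)"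
    (is "?L = ?R")
proof
  fix P :: "('x \<times> 'g) \<times> ('x \<times> 'g)"
  obtain z1 m1 z2 m2 where P: "P = ((z1, m1), (z2, m2))" by (metis prod.collapse)
  show "?L P = ?R P"
  proof (cases "z1 \<in> XX \<and> m1 \<in> GG \<and> z2 \<in> XX \<and> m2 \<in> GG")
    case True
    then show ?thesis unfolding P using assms
      by (subst mul2_gvec_right[OF _ _ _ _ refl _ refl]) (auto simp: gvec2_apply G.inv_solve_right' G.m_assoc)
  next
    case False thus ?thesis unfolding P by (subst mul2_outside) (auto simp: Hb_eq gvec2_apply)
  qed
qed

definition act3 :: "('x \<times> 'x \<times> 'x \<Rightarrow> 'g) \<Rightarrow> ('x \<times> 'x \<times> 'x \<Rightarrow> 'g) \<Rightarrow> ('x \<times> 'x \<times> 'x \<Rightarrow> 'g) \<Rightarrow> 'x \<times> 'x \<times> 'x \<Rightarrow> 'x \<times> 'x \<times> 'x" where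
  "act3 h1 h2 h3 z = (act (h1 z) (fst z), act (h2 z) (fst (snd z)), act (h3 z) (snd (snd z)))"

lemma gvec3_mul:
  assumes "\<And>z. z \<in> XX \<times> XX \<times> XX \<Longrightarrow> f1 z \<in> GG" "\<And>z. z \<in> XX \<times> XX \<times> XX \<Longrightarrow> f2 z \<in> GG"
     "\<And>z. z \<in> XX \<times> XX \<times> XX \<Longrightarrow> f3 z \<in> GG"
     "\<And>z. z \<in> XX \<times> XX \<times> XX \<Longrightarrow> h1 z \<in> GG" "\<And>z. z \<in> XX \<times> XX \<times> XX \<Longrightarrow> h2 z \<in> GG"
     "\<And>z. z \<in> XX \<times> XX \<times> XX \<Longrightarrow> h3 z \<in> GG"
  shows "mul3 Hb Hsc (gvec3 cf f1 f2 f3) (gvec3 df h1 h2 h3) = gvec3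
     (\<lambda>z. cf (act3 h1 h2 h3 z) * df z *
        (inverse (\<gamma> (f1 (act3 h1 h2 h3 z)) (h1 z) (fst z)) *
         (inverse (\<gamma> (f2 (act3 h1 h2 h3 z)) (h2 z) (fst (snd z))) *
          inverse (\<gamma> (f3 (act3 h1 h2 h3 z)) (h3 z) (snd (snd z))))))
     (\<lambda>z. f1 (act3 h1 h2 h3 z) \<otimes>\<^bsub>G\<^esub> h1 z)
     (\<lambda>z. f2 (act3 h1 h2 h3 z) \<otimes>\<^bsub>G\<^esub> h2 z)
     (\<lambda>z. f3 (act3 h1 h2 h3 z) \<otimes>\<^bsub>G\<^esub> h3 z)"
    (is "?L = ?R")
proof
  fix P :: "('x \<times> 'g) \<times> ('x \<times> 'g) \<times> ('x \<times> 'g)"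
  obtain z1 m1 z2 m2 z3 m3 where P: "P = ((z1, m1), (z2, m2), (z3, m3))" by (metis prod.collapse)
  show "?L P = ?R P"
  proof (cases "z1 \<in> XX \<and> m1 \<in> GG \<and> z2 \<in> XX \<and> m2 \<in> GG \<and> z3 \<in> XX \<and> m3 \<in> GG")
    case True
    then show ?thesis unfolding P using assms
      by (subst mul3_gvec_right[OF _ _ _ _ _ _ refl _ refl _ refl]) (auto simp: gvec3_apply G.inv_solve_right' act3_def G.m_assoc)
  next
    case False thus ?thesis unfolding P by (subst mul3_outside) (auto simp: Hb_eq gvec3_apply)
  qed
qed

lemma evec4_mul: "mul4 Hb Hsc (evec4 cf) (evec4 df) = evec4 (\<lambda>z. df z * cf z)"
proof
  fix P :: "('x \<times> 'g) \<times> ('x \<times> 'g) \<times> ('x \<times> 'g) \<times> ('x \<times> 'g)"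
  obtain z1 m1 z2 m2 z3 m3 z4 m4 where P: "P = ((z1, m1), (z2, m2), (z3, m3), (z4, m4))" by (metis prod.collapse)
  show "mul4 Hb Hsc (evec4 cf) (evec4 df) P = evec4 (\<lambda>z. df z * cf z) P"
  proof (cases "z1 \<in> XX \<and> m1 \<in> GG \<and> z2 \<in> XX \<and> m2 \<in> GG \<and> z3 \<in> XX \<and> m3 \<in> GG \<and> z4 \<in> XX \<and> m4 \<in> GG")
    case True
    then show ?thesis unfolding P by (subst mul4_gvec_right) (auto simp: evec4_apply)
  next
    case False thus ?thesis unfolding P by (subst mul4_outside) (auto simp: Hb_eq evec4_apply)
  qed
qed

lemma H_unit_eq_gvec1: "Hun = gvec1 (\<lambda>_. 1) (\<lambda>_. eG)"
  by (auto simp: H_unit_def gvec1_def ext0_def fun_eq_iff)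
lemma H_beta_eq_gvec1: "Hbeta = gvec1 (\<lambda>x. \<omega> (inv\<^bsub>X\<^esub> x) x (inv\<^bsub>X\<^esub> x)) (\<lambda>_. eG)"
  by (auto simp: H_beta_def gvec1_def ext0_def fun_eq_iff)
lemma H_Phi_eq_gvec3: "HPhi = gvec3 (\<lambda>(x, y, z). \<omega> x y z) (\<lambda>_. eG) (\<lambda>_. eG) (\<lambda>_. eG)"
  by (auto simp: H_Phi_def gvec3_def ext0_def fun_eq_iff)
lemma H_R_eq_gvec2: "HR = gvec2 (\<lambda>(x, y). c x y) (\<lambda>_. eG) (\<lambda>t. d (fst t))"
  by (auto simp: H_R_def gvec2_def ext0_def fun_eq_iff)
lemma bvec_eq_gvec1: "x0 \<in> XX \<Longrightarrow> g0 \<in> GG \<Longrightarrow> bvec (x0, g0) = gvec1 (\<lambda>x. if x = x0 then 1 else 0) (\<lambda>_. g0)"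
  by (auto simp: bvec_def gvec1_apply fun_eq_iff)
lemma one2_eq_gvec2: "one2 Hun = gvec2 (\<lambda>_. 1) (\<lambda>_. eG) (\<lambda>_. eG)"
  by (auto simp: one2_def H_unit_eq_gvec1 gvec1_apply gvec2_apply fun_eq_iff)
lemma one3_eq_gvec3: "one3 Hun = gvec3 (\<lambda>_. 1) (\<lambda>_. eG) (\<lambda>_. eG) (\<lambda>_. eG)"
  by (auto simp: one3_def H_unit_eq_gvec1 gvec1_apply gvec3_apply fun_eq_iff)

lemma gvec1_V1: "gvec1 cf f \<in> V1 Hb" by (simp add: gvec1_def ext0_def V1_def)
lemma gvec2_V2: "gvec2 cf f1 f2 \<in> V2 Hb" by (auto simp: gvec2_def ext0_def V2_def)
lemma gvec3_V3: "gvec3 cf f1 f2 f3 \<in> V3 Hb" by (auto simp: gvec3_def ext0_def V3_def)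

lemma gvec2_cong: "(\<And>x y. x \<in> XX \<Longrightarrow> y \<in> XX \<Longrightarrow> cf (x, y) = cf' (x, y)) \<Longrightarrow>
   (\<And>x y. x \<in> XX \<Longrightarrow> y \<in> XX \<Longrightarrow> f1 (x, y) = f1' (x, y)) \<Longrightarrow>
   (\<And>x y. x \<in> XX \<Longrightarrow> y \<in> XX \<Longrightarrow> f2 (x, y) = f2' (x, y)) \<Longrightarrow>
   gvec2 cf f1 f2 = gvec2 cf' f1' f2'"
  by (auto simp: gvec2_def ext0_def Hb_eq fun_eq_iff)
lemma gvec3_cong: "(\<And>x y z. x \<in> XX \<Longrightarrow> y \<in> XX \<Longrightarrow> z \<in> XX \<Longrightarrow> cf (x, y, z) = cf' (x, y, z)) \<Longrightarrow>
   (\<And>x y z. x \<in> XX \<Longrightarrow> y \<in> XX \<Longrightarrow> z \<in> XX \<Longrightarrow> f1 (x, y, z) = f1' (x, y, z)) \<Longrightarrow>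
   (\<And>x y z. x \<in> XX \<Longrightarrow> y \<in> XX \<Longrightarrow> z \<in> XX \<Longrightarrow> f2 (x, y, z) = f2' (x, y, z)) \<Longrightarrow>
   (\<And>x y z. x \<in> XX \<Longrightarrow> y \<in> XX \<Longrightarrow> z \<in> XX \<Longrightarrow> f3 (x, y, z) = f3' (x, y, z)) \<Longrightarrow>
   gvec3 cf f1 f2 f3 = gvec3 cf' f1' f2' f3'"
  by (auto simp: gvec3_def ext0_def Hb_eq fun_eq_iff)
lemma evec4_cong: "(\<And>x y z w. x \<in> XX \<Longrightarrow> y \<in> XX \<Longrightarrow> z \<in> XX \<Longrightarrow> w \<in> XX \<Longrightarrow> cf (x, y, z, w) = cf' (x, y, z, w)) \<Longrightarrow>
   evec4 cf = evec4 cf'"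
  by (auto simp: evec4_def ext0_def Hb_eq fun_eq_iff)

section \<open>Associativity, unit and the associator\<close>

lemma sum_H_sc_left:
  assumes "x \<in> XX" "g \<in> GG" "y \<in> XX" "h \<in> GG"
  shows "(\<Sum>j\<in>Hb. Hsc (x, g) (y, h) j * F j) =
    (if x = act h y then inverse (\<gamma> g h y) * F (y, g \<otimes>\<^bsub>G\<^esub> h) else 0)"
proof (cases "x = act h y")
  case True
  then show ?thesis using assms
    by (subst sum_eq_single[where t="(y, g \<otimes>\<^bsub>G\<^esub> h)"]) (auto simp: finite_Hb H_sc_def split: if_splits)
qed (auto intro!: sum.neutral simp: H_sc_def)

lemma sum_H_sc_middle:
  assumes "y \<in> XX" "h \<in> GG" "z \<in> XX" "m \<in> GG"
  shows "(\<Sum>i\<in>Hb. F i * Hsc (y, h) i (z, m)) =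
    (if y = act (inv\<^bsub>G\<^esub> h \<otimes>\<^bsub>G\<^esub> m) z then F (z, inv\<^bsub>G\<^esub> h \<otimes>\<^bsub>G\<^esub> m) * inverse (\<gamma> h (inv\<^bsub>G\<^esub> h \<otimes>\<^bsub>G\<^esub> m) z) else 0)"
proof -
  let ?t = "(z, inv\<^bsub>G\<^esub> h \<otimes>\<^bsub>G\<^esub> m)"
  have sc: "F i * Hsc (y, h) i (z, m) =
      (if i = ?t \<and> y = act (inv\<^bsub>G\<^esub> h \<otimes>\<^bsub>G\<^esub> m) z then F ?t * inverse (\<gamma> h (inv\<^bsub>G\<^esub> h \<otimes>\<^bsub>G\<^esub> m) z) else 0)"
    if "i \<in> Hb" for i
  proof -
    obtain z' h' where i: "i = (z', h')" "z' \<in> XX" "h' \<in> GG" using \<open>i \<in> Hb\<close> by (cases i) auto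
    have "m = h \<otimes>\<^bsub>G\<^esub> h' \<longleftrightarrow> h' = inv\<^bsub>G\<^esub> h \<otimes>\<^bsub>G\<^esub> m" using i assms by (metis G.inv_solve_left)
    then show ?thesis using i assms by (auto simp: H_sc_def)
  qed
  show ?thesis
  proof (cases "y = act (inv\<^bsub>G\<^esub> h \<otimes>\<^bsub>G\<^esub> m) z")
    case True
    then show ?thesis using assms sc finite_Hb by (subst sum_eq_single[where t="?t"]) auto
  qed (simp add: sc)
qed

lemma H_sc_associative: "sc_associative Hb Hsc"
  unfolding sc_associative_def
proof clarify
  fix x g y h z k w m
  assume "(x, g) \<in> Hb" "(y, h) \<in> Hb" "(z, k) \<in> Hb" "(w, m) \<in> Hb"
  then have m: "x \<in> XX" "g \<in> GG" "y \<in> XX" "h \<in> GG" "z \<in> XX" "k \<in> GG" "w \<in> XX" "m \<in> GG"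
    by auto
  have act: "act (h \<otimes>\<^bsub>G\<^esub> k) z = act h (act k z)" and assoc: "g \<otimes>\<^bsub>G\<^esub> (h \<otimes>\<^bsub>G\<^esub> k) = g \<otimes>\<^bsub>G\<^esub> h \<otimes>\<^bsub>G\<^esub> k"
    using m by (simp_all add: act_mult G.m_assoc)
  have "inverse (\<gamma> g h (act k z)) * inverse (\<gamma> (g \<otimes>\<^bsub>G\<^esub> h) k z) =
      inverse (\<gamma> h k z) * inverse (\<gamma> g (h \<otimes>\<^bsub>G\<^esub> k) z)"
    using cocycle_b[of g h k z] m by (metis inverse_mult_distrib mult.commute)
  then show "(\<Sum>j\<in>Hb. Hsc (x, g) (y, h) j * Hsc j (z, k) (w, m)) =
      (\<Sum>j\<in>Hb. Hsc (y, h) (z, k) j * Hsc (x, g) j (w, m))"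
    unfolding sum_H_sc_left[OF m(1-4)] sum_H_sc_left[OF m(3-6)]
    using m by (auto simp: H_sc_def act assoc)
qed

lemma H_sc_left_unit: "sc_left_unit Hb Hsc Hun"
  unfolding sc_left_unit_def
proof clarify
  fix y h z m
  assume "(y, h) \<in> Hb" "(z, m) \<in> Hb"
  then have m: "y \<in> XX" "h \<in> GG" "z \<in> XX" "m \<in> GG" by auto
  have "(\<Sum>i\<in>Hb. Hun i * Hsc i (y, h) (z, m)) =
      (if y = z then Hun (H_left_factor (y, h) (z, m)) * H_left_coeff (y, h) (z, m) else 0)"
    using H_sc_unique_left_factor m unfolding sc_unique_left_factor_def by auto
  then show "(\<Sum>i\<in>Hb. Hun i * Hsc i (y, h) (z, m)) = (if (y, h) = (z, m) then 1 else 0)"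
    using m by (auto simp: H_left_factor_def H_left_coeff_def H_unit_eq_gvec1 gvec1_apply G.inv_solve_right')
qed

lemma H_sc_right_unit: "sc_right_unit Hb Hsc Hun"
  unfolding sc_right_unit_def
proof clarify
  fix y h z m
  assume "(y, h) \<in> Hb" "(z, m) \<in> Hb"
  then have m: "y \<in> XX" "h \<in> GG" "z \<in> XX" "m \<in> GG" by auto
  show "(\<Sum>i\<in>Hb. Hun i * Hsc (y, h) i (z, m)) = (if (y, h) = (z, m) then 1 else 0)"
    unfolding sum_H_sc_middle[OF m] using m by (auto simp: H_unit_eq_gvec1 gvec1_apply G.inv_solve_left')
qed

lemmas H_algebra = finite_Hb H_sc_associative H_sc_left_unit H_sc_right_unit

lemma mul1_H_associative: "mul1 Hb Hsc (mul1 Hb Hsc u v) w = mul1 Hb Hsc u (mul1 Hb Hsc v w)"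
  by (rule mul1_associative[OF H_sc_associative])

lemma mul2_H_associative: "mul2 Hb Hsc (mul2 Hb Hsc u v) w = mul2 Hb Hsc u (mul2 Hb Hsc v w)"
  unfolding mul2_eq_mul1_tensor
  by (rule mul1_associative[OF sc_associative_tensor[OF H_sc_associative H_sc_associative]])

lemma mul1_H_left_unit: "u \<in> V1 Hb \<Longrightarrow> mul1 Hb Hsc Hun u = u"
  by (rule mul1_left_unit[OF finite_Hb H_sc_left_unit])

lemma mul1_H_right_unit: "u \<in> V1 Hb \<Longrightarrow> mul1 Hb Hsc u Hun = u"
  by (rule mul1_right_unit[OF finite_Hb H_sc_right_unit])

lemma mul2_H_right_unit: "u \<in> V2 Hb \<Longrightarrow> mul2 Hb Hsc u (one2 Hun) = u"
  unfolding mul2_eq_mul1_tensor one2_eq_tensor V2_eq_V1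
  by (rule mul1_right_unit[OF _ sc_right_unit_tensor[OF H_sc_right_unit H_sc_right_unit]])
    (simp add: finite_Hb)

definition HPsi :: "('x \<times> 'g) \<times> ('x \<times> 'g) \<times> ('x \<times> 'g) \<Rightarrow> 'k" where
  "HPsi = gvec3 (\<lambda>(x, y, z). inverse (\<omega> x y z)) (\<lambda>_. eG) (\<lambda>_. eG) (\<lambda>_. eG)"

lemma H_Phi_inverse: "mul3 Hb Hsc HPhi HPsi = one3 Hun" "mul3 Hb Hsc HPsi HPhi = one3 Hun"
  unfolding H_Phi_eq_gvec3 HPsi_def one3_eq_gvec3
  by (subst gvec3_mul; simp; rule gvec3_cong; simp add: act3_def cocycle_nonzero)+

lemma inv3_H_Phi: "inv3 Hb Hsc Hun HPhi = HPsi"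
  using inv3_eqI[OF H_algebra _ H_Phi_inverse] by (simp add: HPsi_def gvec3_V3)

lemma invertible3_H_Phi: "invertible3 Hb Hsc Hun HPhi"
  using H_Phi_inverse unfolding invertible3_def HPsi_def by (blast intro: gvec3_V3)

section \<open>Coproduct and counit\<close>

lemma sum_H_dc:
  assumes "x \<in> XX" "g \<in> GG" "y \<in> XX" "h \<in> GG"
  shows "(\<Sum>i\<in>Hb. F i * Hdc i (x, g) (y, h)) = (if g = h then F (x \<otimes>\<^bsub>X\<^esub> y, g) * \<mu> g x y else 0)"
proof (cases "g = h")
  case True
  then show ?thesis using assms
    by (subst sum_eq_single[where t="(x \<otimes>\<^bsub>X\<^esub> y, g)"]) (auto simp: finite_G finite_X Hb_eq H_dc_def split: if_splits)
next
  case False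
  then show ?thesis by (auto intro!: sum.neutral simp: H_dc_def)
qed

lemma Delta_H_apply:
  "Delta Hb Hdc a ((x, g), (y, h)) =
    (if x \<in> XX \<and> g \<in> GG \<and> y \<in> XX \<and> h \<in> GG \<and> g = h then a (x \<otimes>\<^bsub>X\<^esub> y, g) * \<mu> g x y else 0)"
  by (auto simp: Delta_def ext0_def Hb_eq sum_H_dc[simplified Hb_eq])

lemma Delta_x_id_H_apply:
  "Delta_x_id Hb Hdc u ((x, g1), (y, g2), r) =
    (if x \<in> XX \<and> g1 \<in> GG \<and> y \<in> XX \<and> g2 \<in> GG \<and> r \<in> Hb \<and> g1 = g2 then u ((x \<otimes>\<^bsub>X\<^esub> y, g1), r) * \<mu> g1 x y else 0)"
  by (auto simp: Delta_x_id_def ext0_def Hb_eq sum_H_dc[simplified Hb_eq])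

lemma id_x_Delta_H_apply:
  "id_x_Delta Hb Hdc u (p, (y, g2), (z, g3)) =
    (if p \<in> Hb \<and> y \<in> XX \<and> g2 \<in> GG \<and> z \<in> XX \<and> g3 \<in> GG \<and> g2 = g3 then u (p, (y \<otimes>\<^bsub>X\<^esub> z, g2)) * \<mu> g2 y z else 0)"
  by (auto simp: id_x_Delta_def ext0_def Hb_eq sum_H_dc[simplified Hb_eq])

lemma Delta_1_3_H_apply:
  "Delta_1_3 Hb Hdc u ((x, g1), (y, g2), r, s) =
    (if x \<in> XX \<and> g1 \<in> GG \<and> y \<in> XX \<and> g2 \<in> GG \<and> r \<in> Hb \<and> s \<in> Hb \<and> g1 = g2 then u ((x \<otimes>\<^bsub>X\<^esub> y, g1), r, s) * \<mu> g1 x y else 0)"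
  by (auto simp: Delta_1_3_def ext0_def Hb_eq sum_H_dc[simplified Hb_eq])

lemma Delta_2_3_H_apply:
  "Delta_2_3 Hb Hdc u (p, (x, g1), (y, g2), s) =
    (if p \<in> Hb \<and> x \<in> XX \<and> g1 \<in> GG \<and> y \<in> XX \<and> g2 \<in> GG \<and> s \<in> Hb \<and> g1 = g2 then u (p, (x \<otimes>\<^bsub>X\<^esub> y, g1), s) * \<mu> g1 x y else 0)"
  by (auto simp: Delta_2_3_def ext0_def Hb_eq sum_H_dc[simplified Hb_eq])

lemma Delta_3_3_H_apply:
  "Delta_3_3 Hb Hdc u (p, q, (x, g1), (y, g2)) =
    (if p \<in> Hb \<and> q \<in> Hb \<and> x \<in> XX \<and> g1 \<in> GG \<and> y \<in> XX \<and> g2 \<in> GG \<and> g1 = g2 then u (p, q, (x \<otimes>\<^bsub>X\<^esub> y, g1)) * \<mu> g1 x y else 0)"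
  by (auto simp: Delta_3_3_def ext0_def Hb_eq sum_H_dc[simplified Hb_eq])

lemma sum_H_ep: "(\<Sum>i\<in>Hb. F i * Hep i) = (\<Sum>g\<in>GG. F (eX, g))"
proof -
  have "(\<Sum>i\<in>Hb. F i * Hep i) = (\<Sum>x\<in>XX. \<Sum>g\<in>GG. F (x, g) * Hep (x, g))"
    by (simp add: Hb_eq sum.cartesian_product)
  also have "\<dots> = (\<Sum>x\<in>XX. if x = eX then (\<Sum>g\<in>GG. F (eX, g)) else 0)"
    by (intro sum.cong refl) (auto simp: H_ep_def)
  also have "\<dots> = (\<Sum>g\<in>GG. F (eX, g))" using finite_X by simp
  finally show ?thesis .
qed

lemma eps_H_apply: "eps Hb Hep u = (\<Sum>g\<in>GG. u (eX, g))"
  by (simp add: eps_def sum_H_ep)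

lemma sum_H_ep_left: "(\<Sum>i\<in>Hb. Hep i * F i) = (\<Sum>g\<in>GG. F (eX, g))"
  using sum_H_ep[of F] by (simp add: ac_simps)

lemma eps_x_id_H_apply: "eps_x_id Hb Hep u q = (if q \<in> Hb then (\<Sum>g\<in>GG. u ((eX, g), q)) else 0)"
  by (simp add: eps_x_id_def ext0_def sum_H_ep_left)
lemma id_x_eps_H_apply: "id_x_eps Hb Hep u p = (if p \<in> Hb then (\<Sum>g\<in>GG. u (p, (eX, g))) else 0)"
  by (simp add: id_x_eps_def ext0_def sum_H_ep)
lemma id_eps_id_H_apply: "id_eps_id Hb Hep u (p, r) = (if p \<in> Hb \<and> r \<in> Hb then (\<Sum>g\<in>GG. u (p, (eX, g), r)) else 0)"
  by (simp add: id_eps_id_def ext0_def sum_H_ep)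

lemma mul2_Delta_H_apply:
  assumes m: "x \<in> XX" "g \<in> GG" "y \<in> XX" "h \<in> GG"
  shows "mul2 Hb Hsc (Delta Hb Hdc u) (Delta Hb Hdc v) ((x, g), (y, h)) =
    (\<Sum>k\<in>GG. Delta Hb Hdc v ((x, k), (y, k)) *
      (Delta Hb Hdc u ((act k x, g \<otimes>\<^bsub>G\<^esub> inv\<^bsub>G\<^esub> k), (act k y, h \<otimes>\<^bsub>G\<^esub> inv\<^bsub>G\<^esub> k)) *
       (inverse (\<gamma> (g \<otimes>\<^bsub>G\<^esub> inv\<^bsub>G\<^esub> k) k x) * inverse (\<gamma> (h \<otimes>\<^bsub>G\<^esub> inv\<^bsub>G\<^esub> k) k y))))"
  unfolding mul2_H_apply[OF m]
  by (rule sum_diagonal[OF finite_G, where F="\<lambda>(h1, h2). _ h1 h2", simplified]) (auto simp: Delta_H_apply)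

lemma Delta_H_mult: "Delta Hb Hdc (mul1 Hb Hsc u v) = mul2 Hb Hsc (Delta Hb Hdc u) (Delta Hb Hdc v)"
proof
  fix P :: "('x \<times> 'g) \<times> ('x \<times> 'g)"
  obtain x g y h where P: "P = ((x, g), (y, h))" by (metis prod.collapse)
  show "Delta Hb Hdc (mul1 Hb Hsc u v) P = mul2 Hb Hsc (Delta Hb Hdc u) (Delta Hb Hdc v) P"
  proof (cases "x \<in> XX \<and> g \<in> GG \<and> y \<in> XX \<and> h \<in> GG")
    case True
    then have m: "x \<in> XX" "g \<in> GG" "y \<in> XX" "h \<in> GG" by auto
    show ?thesis
    proof (cases "g = h")
      case True
      have "Delta Hb Hdc (mul1 Hb Hsc u v) P = (\<Sum>k\<in>GG. v (x \<otimes>\<^bsub>X\<^esub> y, k) *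
         (u (act k (x \<otimes>\<^bsub>X\<^esub> y), g \<otimes>\<^bsub>G\<^esub> inv\<^bsub>G\<^esub> k) * (inverse (\<gamma> (g \<otimes>\<^bsub>G\<^esub> inv\<^bsub>G\<^esub> k) k (x \<otimes>\<^bsub>X\<^esub> y)) * \<mu> g x y)))"
        unfolding P using m True by (simp add: Delta_H_apply mul1_H_apply sum_distrib_right sum_distrib_left ac_simps)
      also have "\<dots> = mul2 Hb Hsc (Delta Hb Hdc u) (Delta Hb Hdc v) P"
        unfolding P mul2_Delta_H_apply[OF m] unfolding True[symmetric]
        by (intro sum.cong refl, subst cocycle_d_rearranged) (use m in \<open>simp_all add: Delta_H_apply ac_simps\<close>)
      finally show ?thesis .
    next
      case False
      then show ?thesis unfolding P mul2_Delta_H_apply[OF m] using m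
        by (auto simp: Delta_H_apply G.inv_solve_right' intro!: sum.neutral)
    qed
  qed (auto simp: P mul2_outside Delta_H_apply)
qed

lemma Delta_H_unit: "Delta Hb Hdc Hun = one2 Hun"
  unfolding one2_eq_gvec2 by (auto simp: fun_eq_iff Delta_H_apply gvec2_apply H_unit_eq_gvec1 gvec1_apply)

lemma eps_H_mult: "eps Hb Hep (mul1 Hb Hsc u v) = eps Hb Hep u * eps Hb Hep v"
proof -
  have "eps Hb Hep (mul1 Hb Hsc u v) = (\<Sum>m\<in>GG. \<Sum>h\<in>GG. v (eX, h) * u (eX, m \<otimes>\<^bsub>G\<^esub> inv\<^bsub>G\<^esub> h))"
    by (simp add: eps_H_apply mul1_H_apply)
  also have "\<dots> = (\<Sum>h\<in>GG. v (eX, h) * (\<Sum>m\<in>GG. u (eX, m \<otimes>\<^bsub>G\<^esub> inv\<^bsub>G\<^esub> h)))"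
    by (subst sum.swap) (simp add: sum_distrib_left)
  also have "\<dots> = (\<Sum>h\<in>GG. v (eX, h) * (\<Sum>g\<in>GG. u (eX, g)))"
    by (intro sum.cong refl) (simp add: sum_G_mult_right[where F="\<lambda>g. u (eX, g)"])
  also have "\<dots> = eps Hb Hep u * eps Hb Hep v"
    by (simp add: eps_H_apply sum_distrib_right[symmetric] mult.commute)
  finally show ?thesis .
qed

lemma eps_H_unit: "eps Hb Hep (Hun :: _ \<Rightarrow> 'k) = 1"
  unfolding eps_H_apply
  by (subst sum_eq_single[where t=eG]) (auto simp: finite_G H_unit_eq_gvec1 gvec1_apply)

lemma H_quasi_coassociative:
  "id_x_Delta Hb Hdc (Delta Hb Hdc a) =
   mul3 Hb Hsc (mul3 Hb Hsc HPhi (Delta_x_id Hb Hdc (Delta Hb Hdc a))) HPsi"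
proof
  fix P :: "('x \<times> 'g) \<times> ('x \<times> 'g) \<times> ('x \<times> 'g)"
  obtain x g1 y g2 z g3 where P: "P = ((x, g1), (y, g2), (z, g3))" by (metis prod.collapse)
  show "id_x_Delta Hb Hdc (Delta Hb Hdc a) P = mul3 Hb Hsc (mul3 Hb Hsc HPhi (Delta_x_id Hb Hdc (Delta Hb Hdc a))) HPsi P"
  proof (cases "x \<in> XX \<and> g1 \<in> GG \<and> y \<in> XX \<and> g2 \<in> GG \<and> z \<in> XX \<and> g3 \<in> GG")
    case False
    have "mul3 Hb Hsc (mul3 Hb Hsc HPhi (Delta_x_id Hb Hdc (Delta Hb Hdc a))) HPsi P = 0"
      by (rule mul3_outside) (use False in \<open>auto simp: P Hb_eq\<close>)
    moreover have "id_x_Delta Hb Hdc (Delta Hb Hdc a) P = 0" using False by (auto simp: P id_x_Delta_H_apply)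
    ultimately show ?thesis by simp
  next
    case True
    hence m: "x \<in> XX" "g1 \<in> GG" "y \<in> XX" "g2 \<in> GG" "z \<in> XX" "g3 \<in> GG" by auto
    have "mul3 Hb Hsc (mul3 Hb Hsc HPhi (Delta_x_id Hb Hdc (Delta Hb Hdc a))) HPsi P =
       inverse (\<omega> x y z) * mul3 Hb Hsc HPhi (Delta_x_id Hb Hdc (Delta Hb Hdc a)) P"
      unfolding P HPsi_def using m by (subst mul3_gvec_right[OF m refl _ refl _ refl]) simp_all
    also have "\<dots> = inverse (\<omega> x y z) * (\<omega> (act g1 x) (act g2 y) (act g3 z) *
        Delta_x_id Hb Hdc (Delta Hb Hdc a) P)"
      unfolding P H_Phi_eq_gvec3 by (subst mul3_gvec_e_left[OF m]) simp
    finally have R: "mul3 Hb Hsc (mul3 Hb Hsc HPhi (Delta_x_id Hb Hdc (Delta Hb Hdc a))) HPsi P =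
       inverse (\<omega> x y z) * (\<omega> (act g1 x) (act g2 y) (act g3 z) * Delta_x_id Hb Hdc (Delta Hb Hdc a) P)" .
    show ?thesis
    proof (cases "g1 = g2 \<and> g2 = g3")
      case False
      thus ?thesis unfolding R unfolding P using m by (auto simp: Delta_x_id_H_apply id_x_Delta_H_apply Delta_H_apply)
    next
      case True
      note c = cocycle_c_rearranged[OF m(6) m(1) m(3) m(5)]
      show ?thesis unfolding R unfolding P using m True
        by (simp add: Delta_x_id_H_apply id_x_Delta_H_apply Delta_H_apply X.m_assoc c ac_simps)
    qed
  qed
qed

lemma H_counit_left: assumes a: "a \<in> V1 Hb" shows "eps_x_id Hb Hep (Delta Hb Hdc a) = a"
proof
  fix q :: "'x \<times> 'g"
  obtain y h where q: "q = (y, h)" by (cases q)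
  show "eps_x_id Hb Hep (Delta Hb Hdc a) q = a q"
  proof (cases "q \<in> Hb")
    case True
    hence m: "y \<in> XX" "h \<in> GG" by (auto simp: q Hb_eq)
    show ?thesis unfolding eps_x_id_H_apply q using True m
      by (subst sum_eq_single[where t=h]) (auto simp: finite_G Delta_H_apply q)
  next
    case False thus ?thesis using a by (auto simp: eps_x_id_H_apply V1_def q)
  qed
qed

lemma H_counit_right: assumes a: "a \<in> V1 Hb" shows "id_x_eps Hb Hep (Delta Hb Hdc a) = a"
proof
  fix q :: "'x \<times> 'g"
  obtain y h where q: "q = (y, h)" by (cases q)
  show "id_x_eps Hb Hep (Delta Hb Hdc a) q = a q"
  proof (cases "q \<in> Hb")
    case True
    hence m: "y \<in> XX" "h \<in> GG" by (auto simp: q Hb_eq)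
    show ?thesis unfolding id_x_eps_H_apply q using True m
      by (subst sum_eq_single[where t=h]) (auto simp: finite_G Delta_H_apply q)
  next
    case False thus ?thesis using a by (auto simp: id_x_eps_H_apply V1_def q)
  qed
qed

lemma id_eps_id_H_Phi: "id_eps_id Hb Hep HPhi = one2 Hun"
proof
  fix P :: "('x \<times> 'g) \<times> ('x \<times> 'g)"
  obtain x g y h where P: "P = ((x, g), (y, h))" by (metis prod.collapse)
  show "id_eps_id Hb Hep HPhi P = one2 Hun P"
    unfolding P id_eps_id_H_apply one2_eq_gvec2
    by (subst sum_eq_single[where t=eG]) (auto simp: finite_G H_Phi_eq_gvec3 gvec3_apply gvec2_apply)
qed

lemma Delta_3_3_H_Phi: "Delta_3_3 Hb Hdc HPhi = evec4 (\<lambda>(x, y, z, w). \<omega> x y (z \<otimes>\<^bsub>X\<^esub> w))"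
  by (auto simp: fun_eq_iff Delta_3_3_H_apply H_Phi_eq_gvec3 gvec3_apply evec4_apply)
lemma Delta_1_3_H_Phi: "Delta_1_3 Hb Hdc HPhi = evec4 (\<lambda>(x, y, z, w). \<omega> (x \<otimes>\<^bsub>X\<^esub> y) z w)"
  by (auto simp: fun_eq_iff Delta_1_3_H_apply H_Phi_eq_gvec3 gvec3_apply evec4_apply)
lemma Delta_2_3_H_Phi: "Delta_2_3 Hb Hdc HPhi = evec4 (\<lambda>(x, y, z, w). \<omega> x (y \<otimes>\<^bsub>X\<^esub> z) w)"
  by (auto simp: fun_eq_iff Delta_2_3_H_apply H_Phi_eq_gvec3 gvec3_apply evec4_apply)
lemma one_x3_H_Phi: "one_x3 Hun HPhi = evec4 (\<lambda>(x, y, z, w). \<omega> y z w)"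
  by (auto simp: fun_eq_iff one_x3_def H_unit_eq_gvec1 gvec1_apply H_Phi_eq_gvec3 gvec3_apply evec4_apply)
lemma x3_one_H_Phi: "x3_one Hun HPhi = evec4 (\<lambda>(x, y, z, w). \<omega> x y z)"
  by (auto simp: fun_eq_iff x3_one_def H_unit_eq_gvec1 gvec1_apply H_Phi_eq_gvec3 gvec3_apply evec4_apply)

lemma H_pentagon:
  "mul4 Hb Hsc (Delta_3_3 Hb Hdc HPhi) (Delta_1_3 Hb Hdc HPhi) =
   mul4 Hb Hsc (mul4 Hb Hsc (one_x3 Hun HPhi) (Delta_2_3 Hb Hdc HPhi)) (x3_one Hun HPhi)"
  unfolding Delta_3_3_H_Phi Delta_1_3_H_Phi Delta_2_3_H_Phi one_x3_H_Phi x3_one_H_Phi evec4_mul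
  apply (rule evec4_cong)
  subgoal for x y z w using cocycle_a[of x y z w] by (simp add: ac_simps)
  done

lemma H_quasi_bialgebra: "quasi_bialgebra Hb Hsc Hun Hdc Hep HPhi"
  unfolding quasi_bialgebra_def
  using finite_Hb gvec1_V1 gvec3_V3 mul1_H_associative mul1_H_left_unit mul1_H_right_unit Delta_H_mult Delta_H_unit
    eps_H_mult eps_H_unit invertible3_H_Phi H_quasi_coassociative H_pentagon H_counit_left H_counit_right id_eps_id_H_Phi
  by (simp add: inv3_H_Phi) (simp add: H_unit_eq_gvec1 H_Phi_eq_gvec3 gvec1_V1 gvec3_V3)

section \<open>Antipode\<close>

abbreviation "HS \<equiv> lin_map Hb Hsm"

text \<open>\<open>HS u (y, k)\<close> reads off the coefficient at \<open>t\<^sub>y k\<close>, whose only preimage under \<open>S\<close> is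
  \<open>t\<^bsub>(\<^sup>ky)\<^sup>-\<^sup>1\<^esub> k\<^sup>-\<^sup>1\<close>.\<close>

definition antipode_coeff :: "'x \<Rightarrow> 'g \<Rightarrow> 'k" where
  "antipode_coeff y k = \<gamma> k (inv\<^bsub>G\<^esub> k) (act k y) / \<mu> (inv\<^bsub>G\<^esub> k) (inv\<^bsub>X\<^esub> (act k y)) (act k y)"

lemma antipode_H_apply:
  "HS u (y, k) = (if y \<in> XX \<and> k \<in> GG then antipode_coeff y k * u (inv\<^bsub>X\<^esub> (act k y), inv\<^bsub>G\<^esub> k) else 0)"
proof (cases "y \<in> XX \<and> k \<in> GG")
  case True
  then have y: "y \<in> XX" and k: "k \<in> GG" by auto
  let ?t = "(inv\<^bsub>X\<^esub> (act k y), inv\<^bsub>G\<^esub> k)"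
  have "(\<Sum>i\<in>Hb. u i * Hsm i (y, k)) = u ?t * Hsm ?t (y, k)"
  proof (rule sum_eq_single[OF finite_Hb])
    show "?t \<in> Hb" using y k by simp
  next
    fix i assume i: "i \<in> Hb" "i \<noteq> ?t"
    then obtain x g where x: "i = (x, g)" "x \<in> XX" "g \<in> GG" by (cases i) auto
    have "\<not> (y = act g (inv\<^bsub>X\<^esub> x) \<and> k = inv\<^bsub>G\<^esub> g)"
      using i x by auto
    then show "u i * Hsm i (y, k) = 0" using x by (auto simp: H_sm_def)
  qed
  also have "\<dots> = antipode_coeff y k * u ?t"
    using y k by (simp add: H_sm_def antipode_coeff_def)
  finally show ?thesis using True by (simp add: lin_map_def ext0_def)
qed (auto simp: lin_map_def ext0_def)

lemma antipode_coeff_nonzero: "y \<in> XX \<Longrightarrow> k \<in> GG \<Longrightarrow> antipode_coeff y k \<noteq> 0"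
  by (simp add: antipode_coeff_def cocycle_nonzero)

lemma antipode_coeff_one [simp]: "y \<in> XX \<Longrightarrow> antipode_coeff y eG = 1"
  by (simp add: antipode_coeff_def)

lemma antipode_H_V1: "HS u \<in> V1 Hb"
  by (simp add: lin_map_def ext0_def V1_def)

definition antipode_H_inv :: "('x \<times> 'g \<Rightarrow> 'k) \<Rightarrow> 'x \<times> 'g \<Rightarrow> 'k" where
  "antipode_H_inv v = (\<lambda>(x, g). if x \<in> XX \<and> g \<in> GG then
     inverse (antipode_coeff (inv\<^bsub>X\<^esub> (act g x)) (inv\<^bsub>G\<^esub> g)) * v (inv\<^bsub>X\<^esub> (act g x), inv\<^bsub>G\<^esub> g) else 0)"

lemma antipode_H_bij: "bij_betw HS (V1 Hb) (V1 Hb)"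
proof (rule bij_betw_byWitness[where f'=antipode_H_inv])
  show "\<forall>a\<in>V1 Hb. antipode_H_inv (HS a) = a"
  proof (intro ballI ext)
    fix a :: "'x \<times> 'g \<Rightarrow> 'k" and p assume "a \<in> V1 Hb"
    then show "antipode_H_inv (HS a) p = a p"
      using antipode_coeff_nonzero[of "inv\<^bsub>X\<^esub> (act (snd p) (fst p))" "inv\<^bsub>G\<^esub> (snd p)"]
      by (cases p) (auto simp: antipode_H_inv_def antipode_H_apply V1_def)
  qed
  show "\<forall>a\<in>V1 Hb. HS (antipode_H_inv a) = a"
  proof (intro ballI ext)
    fix a :: "'x \<times> 'g \<Rightarrow> 'k" and p assume "a \<in> V1 Hb"
    then show "HS (antipode_H_inv a) p = a p"
      using antipode_coeff_nonzero[of "fst p" "snd p"]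
      by (cases p) (auto simp: antipode_H_inv_def antipode_H_apply V1_def)
  qed
  show "HS ` V1 Hb \<subseteq> V1 Hb" using antipode_H_V1 by blast
  show "antipode_H_inv ` V1 Hb \<subseteq> V1 Hb" by (auto simp: V1_def antipode_H_inv_def)
qed

lemma antipode_H_unit: "HS Hun = Hun"
  by (auto simp: fun_eq_iff antipode_H_apply H_unit_eq_gvec1 gvec1_apply)

lemma antipode_H_bvec:
  assumes "x \<in> XX" "g \<in> GG"
  shows "HS (bvec (x, g)) =
    gvec1 (\<lambda>y. if y = act g (inv\<^bsub>X\<^esub> x) then antipode_coeff y (inv\<^bsub>G\<^esub> g) else 0) (\<lambda>_. inv\<^bsub>G\<^esub> g)"
proof
  fix p :: "'x \<times> 'g"
  obtain y k where p: "p = (y, k)" by (cases p)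
  have "k \<in> GG \<Longrightarrow> inv\<^bsub>G\<^esub> k = g \<longleftrightarrow> k = inv\<^bsub>G\<^esub> g"
    and "y \<in> XX \<Longrightarrow> k = inv\<^bsub>G\<^esub> g \<Longrightarrow> inv\<^bsub>X\<^esub> (act k y) = x \<longleftrightarrow> y = act g (inv\<^bsub>X\<^esub> x)"
    using assms by auto
  then show "HS (bvec (x, g)) p =
      gvec1 (\<lambda>y. if y = act g (inv\<^bsub>X\<^esub> x) then antipode_coeff y (inv\<^bsub>G\<^esub> g) else 0) (\<lambda>_. inv\<^bsub>G\<^esub> g) p"
    using assms by (auto simp: p antipode_H_apply gvec1_apply bvec_def)
qed

lemma antipode_coeff_mult:
  assumes y: "y \<in> XX" and a: "a \<in> GG" and b: "b \<in> GG"
  shows "antipode_coeff y a * inverse (\<gamma> (inv\<^bsub>G\<^esub> a \<otimes>\<^bsub>G\<^esub> inv\<^bsub>G\<^esub> b) b (inv\<^bsub>X\<^esub> (act a y))) =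
    antipode_coeff y (b \<otimes>\<^bsub>G\<^esub> a) *
      (antipode_coeff (act b (act a y)) (inv\<^bsub>G\<^esub> b) * inverse (\<gamma> (inv\<^bsub>G\<^esub> b) (b \<otimes>\<^bsub>G\<^esub> a) y))"
proof -
  define Y where "Y = act a y"
  define g' where "g' = inv\<^bsub>G\<^esub> a \<otimes>\<^bsub>G\<^esub> inv\<^bsub>G\<^esub> b"
  have Y: "Y \<in> XX" and g': "g' \<in> GG" using y a b by (simp_all add: Y_def g'_def)
  have g'b: "g' \<otimes>\<^bsub>G\<^esub> b = inv\<^bsub>G\<^esub> a" and iba: "inv\<^bsub>G\<^esub> (b \<otimes>\<^bsub>G\<^esub> a) = g'"
    using a b by (simp_all add: g'_def G.m_assoc G.inv_mult_group)
  have nz: "\<gamma> g' b (inv\<^bsub>X\<^esub> Y) \<noteq> 0" "\<gamma> g' b Y \<noteq> 0" "\<mu> (inv\<^bsub>G\<^esub> a) (inv\<^bsub>X\<^esub> Y) Y \<noteq> 0"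
    "\<mu> g' (inv\<^bsub>X\<^esub> (act b Y)) (act b Y) \<noteq> 0" "\<mu> b (inv\<^bsub>X\<^esub> Y) Y \<noteq> 0"
    "\<gamma> (inv\<^bsub>G\<^esub> b) (b \<otimes>\<^bsub>G\<^esub> a) y \<noteq> 0" "\<gamma> (inv\<^bsub>G\<^esub> b) b Y \<noteq> 0"
    using a b g' Y y by (simp_all add: cocycle_nonzero)
  have mu: "\<mu> g' (inv\<^bsub>X\<^esub> (act b Y)) (act b Y) =
      \<gamma> g' b (inv\<^bsub>X\<^esub> Y) * \<gamma> g' b Y * \<mu> (inv\<^bsub>G\<^esub> a) (inv\<^bsub>X\<^esub> Y) Y / \<mu> b (inv\<^bsub>X\<^esub> Y) Y"
    using cocycle_d_inverse_pair[OF g' b Y] nz by (simp add: g'b field_simps)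
  have gamma: "\<gamma> (b \<otimes>\<^bsub>G\<^esub> a) g' (act b Y) =
      \<gamma> g' b Y * \<gamma> a (inv\<^bsub>G\<^esub> a) Y * \<gamma> (inv\<^bsub>G\<^esub> b) (b \<otimes>\<^bsub>G\<^esub> a) y / \<gamma> (inv\<^bsub>G\<^esub> b) b Y"
    using cocycle_b_antipode[OF a b y] nz by (simp add: Y_def g'_def field_simps)
  have c1: "antipode_coeff y (b \<otimes>\<^bsub>G\<^esub> a) =
      \<gamma> (b \<otimes>\<^bsub>G\<^esub> a) g' (act b Y) / \<mu> g' (inv\<^bsub>X\<^esub> (act b Y)) (act b Y)"
    and c2: "antipode_coeff (act b Y) (inv\<^bsub>G\<^esub> b) = \<gamma> (inv\<^bsub>G\<^esub> b) b Y / \<mu> b (inv\<^bsub>X\<^esub> Y) Y"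
    using a b Y y by (simp_all add: antipode_coeff_def Y_def iba act_mult)
  have c3: "antipode_coeff y a = \<gamma> a (inv\<^bsub>G\<^esub> a) Y / \<mu> (inv\<^bsub>G\<^esub> a) (inv\<^bsub>X\<^esub> Y) Y"
    by (simp add: antipode_coeff_def Y_def)
  show ?thesis
    unfolding Y_def[symmetric] g'_def[symmetric] c1 c2 c3 mu gamma using nz by (simp add: field_simps)
qed

lemma antipode_H_mult_term:
  assumes y: "y \<in> XX" and k: "k \<in> GG" and h: "h \<in> GG"
  shows "antipode_coeff y k * (v (inv\<^bsub>X\<^esub> (act k y), h) *
       (u (act h (inv\<^bsub>X\<^esub> (act k y)), inv\<^bsub>G\<^esub> k \<otimes>\<^bsub>G\<^esub> inv\<^bsub>G\<^esub> h) *
        inverse (\<gamma> (inv\<^bsub>G\<^esub> k \<otimes>\<^bsub>G\<^esub> inv\<^bsub>G\<^esub> h) h (inv\<^bsub>X\<^esub> (act k y))))) =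
    HS u (y, h \<otimes>\<^bsub>G\<^esub> k) * (HS v (act (h \<otimes>\<^bsub>G\<^esub> k) y, k \<otimes>\<^bsub>G\<^esub> inv\<^bsub>G\<^esub> (h \<otimes>\<^bsub>G\<^esub> k)) *
       inverse (\<gamma> (k \<otimes>\<^bsub>G\<^esub> inv\<^bsub>G\<^esub> (h \<otimes>\<^bsub>G\<^esub> k)) (h \<otimes>\<^bsub>G\<^esub> k) y))"
proof -
  have e1: "k \<otimes>\<^bsub>G\<^esub> inv\<^bsub>G\<^esub> (h \<otimes>\<^bsub>G\<^esub> k) = inv\<^bsub>G\<^esub> h"
    using h k by (simp add: G.inv_mult_group G.m_assoc[symmetric])
  have e2: "act (inv\<^bsub>G\<^esub> h) (act (h \<otimes>\<^bsub>G\<^esub> k) y) = act k y"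
    and e3: "inv\<^bsub>G\<^esub> (h \<otimes>\<^bsub>G\<^esub> k) = inv\<^bsub>G\<^esub> k \<otimes>\<^bsub>G\<^esub> inv\<^bsub>G\<^esub> h"
    and e4: "act h (inv\<^bsub>X\<^esub> (act k y)) = inv\<^bsub>X\<^esub> (act (h \<otimes>\<^bsub>G\<^esub> k) y)"
    using h k y by (simp_all add: act_mult G.inv_mult_group)
  have "antipode_coeff y k * (v (inv\<^bsub>X\<^esub> (act k y), h) *
       (u (act h (inv\<^bsub>X\<^esub> (act k y)), inv\<^bsub>G\<^esub> k \<otimes>\<^bsub>G\<^esub> inv\<^bsub>G\<^esub> h) *
        inverse (\<gamma> (inv\<^bsub>G\<^esub> k \<otimes>\<^bsub>G\<^esub> inv\<^bsub>G\<^esub> h) h (inv\<^bsub>X\<^esub> (act k y))))) =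
      (antipode_coeff y k * inverse (\<gamma> (inv\<^bsub>G\<^esub> k \<otimes>\<^bsub>G\<^esub> inv\<^bsub>G\<^esub> h) h (inv\<^bsub>X\<^esub> (act k y)))) *
      (v (inv\<^bsub>X\<^esub> (act k y), h) * u (inv\<^bsub>X\<^esub> (act (h \<otimes>\<^bsub>G\<^esub> k) y), inv\<^bsub>G\<^esub> (h \<otimes>\<^bsub>G\<^esub> k)))"
    by (simp add: e3 e4 ac_simps)
  also have "\<dots> = (antipode_coeff y (h \<otimes>\<^bsub>G\<^esub> k) *
        (antipode_coeff (act h (act k y)) (inv\<^bsub>G\<^esub> h) * inverse (\<gamma> (inv\<^bsub>G\<^esub> h) (h \<otimes>\<^bsub>G\<^esub> k) y))) *
      (v (inv\<^bsub>X\<^esub> (act k y), h) * u (inv\<^bsub>X\<^esub> (act (h \<otimes>\<^bsub>G\<^esub> k) y), inv\<^bsub>G\<^esub> (h \<otimes>\<^bsub>G\<^esub> k)))"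
    by (simp only: antipode_coeff_mult[OF y k h])
  also have "\<dots> = HS u (y, h \<otimes>\<^bsub>G\<^esub> k) * (HS v (act (h \<otimes>\<^bsub>G\<^esub> k) y, k \<otimes>\<^bsub>G\<^esub> inv\<^bsub>G\<^esub> (h \<otimes>\<^bsub>G\<^esub> k)) *
       inverse (\<gamma> (k \<otimes>\<^bsub>G\<^esub> inv\<^bsub>G\<^esub> (h \<otimes>\<^bsub>G\<^esub> k)) (h \<otimes>\<^bsub>G\<^esub> k) y))"
    unfolding e1 antipode_H_apply using h k y e2 by (simp add: act_mult ac_simps)
  finally show ?thesis .
qed

lemma antipode_H_antimultiplicative: "HS (mul1 Hb Hsc u v) = mul1 Hb Hsc (HS v) (HS u)"
proof
  fix p :: "'x \<times> 'g"
  obtain y k where p: "p = (y, k)" by (cases p)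
  show "HS (mul1 Hb Hsc u v) p = mul1 Hb Hsc (HS v) (HS u) p"
  proof (cases "y \<in> XX \<and> k \<in> GG")
    case True
    then have y: "y \<in> XX" and k: "k \<in> GG" by auto
    have "HS (mul1 Hb Hsc u v) p = (\<Sum>h\<in>GG. antipode_coeff y k * (v (inv\<^bsub>X\<^esub> (act k y), h) *
       (u (act h (inv\<^bsub>X\<^esub> (act k y)), inv\<^bsub>G\<^esub> k \<otimes>\<^bsub>G\<^esub> inv\<^bsub>G\<^esub> h) *
        inverse (\<gamma> (inv\<^bsub>G\<^esub> k \<otimes>\<^bsub>G\<^esub> inv\<^bsub>G\<^esub> h) h (inv\<^bsub>X\<^esub> (act k y))))))"
      using y k by (simp add: p antipode_H_apply mul1_H_apply sum_distrib_left)
    also have "\<dots> = (\<Sum>h\<in>GG. HS u (y, h \<otimes>\<^bsub>G\<^esub> k) * (HS v (act (h \<otimes>\<^bsub>G\<^esub> k) y, k \<otimes>\<^bsub>G\<^esub> inv\<^bsub>G\<^esub> (h \<otimes>\<^bsub>G\<^esub> k)) *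
       inverse (\<gamma> (k \<otimes>\<^bsub>G\<^esub> inv\<^bsub>G\<^esub> (h \<otimes>\<^bsub>G\<^esub> k)) (h \<otimes>\<^bsub>G\<^esub> k) y)))"
      using y k by (intro sum.cong refl antipode_H_mult_term)
    also have "\<dots> = mul1 Hb Hsc (HS v) (HS u) p"
      unfolding p mul1_H_apply[OF y k] using k
      by (rule sum_G_mult_right[where F="\<lambda>h. HS u (y, h) * (HS v (act h y, k \<otimes>\<^bsub>G\<^esub> inv\<^bsub>G\<^esub> h) *
          inverse (\<gamma> (k \<otimes>\<^bsub>G\<^esub> inv\<^bsub>G\<^esub> h) h y))"])
    finally show ?thesis .
  qed (auto simp: p antipode_H_apply mul1_outside)
qed

lemma sum_Delta_H:
  "(\<Sum>i\<in>Hb. \<Sum>j\<in>Hb. Delta Hb Hdc a (i, j) * F i j) =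
   (\<Sum>g\<in>GG. \<Sum>x\<in>XX. \<Sum>y\<in>XX. a (x \<otimes>\<^bsub>X\<^esub> y, g) * \<mu> g x y * F (x, g) (y, g))"
proof -
  have "(\<Sum>i\<in>Hb. \<Sum>j\<in>Hb. Delta Hb Hdc a (i, j) * F i j) =
     (\<Sum>x\<in>XX. \<Sum>g\<in>GG. \<Sum>y\<in>XX. \<Sum>h\<in>GG. Delta Hb Hdc a ((x, g), (y, h)) * F (x, g) (y, h))"
    by (simp add: sum_Hb)
  also have "\<dots> = (\<Sum>x\<in>XX. \<Sum>g\<in>GG. \<Sum>y\<in>XX. a (x \<otimes>\<^bsub>X\<^esub> y, g) * \<mu> g x y * F (x, g) (y, g))"
    by (intro sum.cong refl, subst sum_eq_single) (auto simp: finite_G Delta_H_apply)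
  also have "\<dots> = (\<Sum>g\<in>GG. \<Sum>x\<in>XX. \<Sum>y\<in>XX. a (x \<otimes>\<^bsub>X\<^esub> y, g) * \<mu> g x y * F (x, g) (y, g))"
    by (rule sum.swap)
  finally show ?thesis .
qed

lemma antipode_alpha_term:
  assumes "x \<in> XX" "g \<in> GG" "y \<in> XX"
  shows "mul1 Hb Hsc (mul1 Hb Hsc (HS (bvec (x, g))) Hun) (bvec (y, g)) (z, m) =
    (if (z \<in> XX \<and> m = eG) \<and> x = inv\<^bsub>X\<^esub> z \<and> y = z then
       antipode_coeff (act g z) (inv\<^bsub>G\<^esub> g) * inverse (\<gamma> (inv\<^bsub>G\<^esub> g) g z) else 0)"
  unfolding mul1_H_right_unit[OF antipode_H_V1]
  unfolding antipode_H_bvec[OF assms(1,2)] bvec_eq_gvec1[OF assms(3,2)]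
  by (subst gvec1_mul) (use assms in \<open>auto simp: gvec1_apply\<close>)

lemma antipode_alpha_coeff:
  "g \<in> GG \<Longrightarrow> z \<in> XX \<Longrightarrow>
    \<mu> g (inv\<^bsub>X\<^esub> z) z * (antipode_coeff (act g z) (inv\<^bsub>G\<^esub> g) * inverse (\<gamma> (inv\<^bsub>G\<^esub> g) g z)) = 1"
  by (simp add: antipode_coeff_def cocycle_nonzero)

lemma H_antipode_alpha:
  "(\<lambda>p. \<Sum>i\<in>Hb. \<Sum>j\<in>Hb. Delta Hb Hdc a (i, j) *
      mul1 Hb Hsc (mul1 Hb Hsc (HS (bvec i)) Hun) (bvec j) p) = smult1 (eps Hb Hep a) Hun"
proof
  fix p :: "'x \<times> 'g"
  obtain z m where p: "p = (z, m)" by (cases p)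
  have "(\<Sum>i\<in>Hb. \<Sum>j\<in>Hb. Delta Hb Hdc a (i, j) * mul1 Hb Hsc (mul1 Hb Hsc (HS (bvec i)) Hun) (bvec j) p) =
     (\<Sum>g\<in>GG. \<Sum>x\<in>XX. \<Sum>y\<in>XX. a (x \<otimes>\<^bsub>X\<^esub> y, g) * \<mu> g x y *
       (if (z \<in> XX \<and> m = eG) \<and> x = inv\<^bsub>X\<^esub> z \<and> y = z then
          antipode_coeff (act g z) (inv\<^bsub>G\<^esub> g) * inverse (\<gamma> (inv\<^bsub>G\<^esub> g) g z) else 0))"
    unfolding p sum_Delta_H by (intro sum.cong refl) (simp add: antipode_alpha_term)
  also have "\<dots> = (\<Sum>g\<in>GG. if z \<in> XX \<and> m = eG then a (eX, g) else 0)"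
    by (intro sum.cong refl, subst sum_sum_single) (auto simp: finite_X antipode_alpha_coeff mult.assoc)
  also have "\<dots> = smult1 (eps Hb Hep a) Hun p"
    by (cases "z \<in> XX \<and> m = eG") (auto simp: p smult1_def eps_H_apply H_unit_eq_gvec1 gvec1_apply)
  finally show "(\<Sum>i\<in>Hb. \<Sum>j\<in>Hb. Delta Hb Hdc a (i, j) *
      mul1 Hb Hsc (mul1 Hb Hsc (HS (bvec i)) Hun) (bvec j) p) = smult1 (eps Hb Hep a) Hun p" .
qed

lemma antipode_beta_term:
  assumes "x \<in> XX" "g \<in> GG" "y \<in> XX"
  shows "mul1 Hb Hsc (mul1 Hb Hsc (bvec (x, g)) Hbeta) (HS (bvec (y, g))) (z, m) =
    (if (z \<in> XX \<and> m = eG) \<and> x = act (inv\<^bsub>G\<^esub> g) z \<and> y = inv\<^bsub>X\<^esub> (act (inv\<^bsub>G\<^esub> g) z) then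
       \<omega> (inv\<^bsub>X\<^esub> (act (inv\<^bsub>G\<^esub> g) z)) (act (inv\<^bsub>G\<^esub> g) z) (inv\<^bsub>X\<^esub> (act (inv\<^bsub>G\<^esub> g) z)) *
         antipode_coeff z (inv\<^bsub>G\<^esub> g) * inverse (\<gamma> g (inv\<^bsub>G\<^esub> g) z)
     else 0)"
  unfolding antipode_H_bvec[OF assms(3,2)]
  using assms by (auto simp: bvec_eq_gvec1 H_beta_eq_gvec1 gvec1_mul gvec1_apply)

lemma antipode_beta_coeff:
  assumes g: "g \<in> GG" and x: "x \<in> XX"
  shows "\<mu> g x (inv\<^bsub>X\<^esub> x) * (\<omega> (inv\<^bsub>X\<^esub> x) x (inv\<^bsub>X\<^esub> x) * antipode_coeff (act g x) (inv\<^bsub>G\<^esub> g) *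
      inverse (\<gamma> g (inv\<^bsub>G\<^esub> g) (act g x))) = \<omega> (inv\<^bsub>X\<^esub> (act g x)) (act g x) (inv\<^bsub>X\<^esub> (act g x))"
proof -
  have "(\<mu> g x (inv\<^bsub>X\<^esub> x) * \<mu> g (inv\<^bsub>X\<^esub> x) (x \<otimes>\<^bsub>X\<^esub> inv\<^bsub>X\<^esub> x)) /
      (\<mu> g (inv\<^bsub>X\<^esub> x \<otimes>\<^bsub>X\<^esub> x) (inv\<^bsub>X\<^esub> x) * \<mu> g (inv\<^bsub>X\<^esub> x) x) =
      \<omega> (act g (inv\<^bsub>X\<^esub> x)) (act g x) (act g (inv\<^bsub>X\<^esub> x)) / \<omega> (inv\<^bsub>X\<^esub> x) x (inv\<^bsub>X\<^esub> x)"
    by (rule cocycle_c) (use g x in simp_all)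
  then have c: "\<mu> g x (inv\<^bsub>X\<^esub> x) / \<mu> g (inv\<^bsub>X\<^esub> x) x =
      \<omega> (inv\<^bsub>X\<^esub> (act g x)) (act g x) (inv\<^bsub>X\<^esub> (act g x)) / \<omega> (inv\<^bsub>X\<^esub> x) x (inv\<^bsub>X\<^esub> x)"
    using g x by simp
  have S: "antipode_coeff (act g x) (inv\<^bsub>G\<^esub> g) = \<gamma> g (inv\<^bsub>G\<^esub> g) (act g x) / \<mu> g (inv\<^bsub>X\<^esub> x) x"
    using g x by (simp add: antipode_coeff_def gamma_inv_swap)
  have "\<mu> g (inv\<^bsub>X\<^esub> x) x \<noteq> 0" "\<omega> (inv\<^bsub>X\<^esub> x) x (inv\<^bsub>X\<^esub> x) \<noteq> 0" "\<gamma> g (inv\<^bsub>G\<^esub> g) (act g x) \<noteq> 0"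
    using g x by (simp_all add: cocycle_nonzero)
  then show ?thesis unfolding S using c by (simp add: field_simps)
qed

lemma H_antipode_beta:
  "(\<lambda>p. \<Sum>i\<in>Hb. \<Sum>j\<in>Hb. Delta Hb Hdc a (i, j) *
      mul1 Hb Hsc (mul1 Hb Hsc (bvec i) Hbeta) (HS (bvec j)) p) = smult1 (eps Hb Hep a) Hbeta"
proof
  fix p :: "'x \<times> 'g"
  obtain z m where p: "p = (z, m)" by (cases p)
  let ?x0 = "\<lambda>g. act (inv\<^bsub>G\<^esub> g) z"
  have "(\<Sum>i\<in>Hb. \<Sum>j\<in>Hb. Delta Hb Hdc a (i, j) * mul1 Hb Hsc (mul1 Hb Hsc (bvec i) Hbeta) (HS (bvec j)) p) =
     (\<Sum>g\<in>GG. \<Sum>x\<in>XX. \<Sum>y\<in>XX. a (x \<otimes>\<^bsub>X\<^esub> y, g) * \<mu> g x y *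
       (if (z \<in> XX \<and> m = eG) \<and> x = ?x0 g \<and> y = inv\<^bsub>X\<^esub> (?x0 g) then
          \<omega> (inv\<^bsub>X\<^esub> (?x0 g)) (?x0 g) (inv\<^bsub>X\<^esub> (?x0 g)) * antipode_coeff z (inv\<^bsub>G\<^esub> g) *
          inverse (\<gamma> g (inv\<^bsub>G\<^esub> g) z) else 0))"
    unfolding p sum_Delta_H by (intro sum.cong refl) (simp add: antipode_beta_term)
  also have "\<dots> = (\<Sum>g\<in>GG. if z \<in> XX \<and> m = eG then a (eX, g) * \<omega> (inv\<^bsub>X\<^esub> z) z (inv\<^bsub>X\<^esub> z) else 0)"
  proof (intro sum.cong refl, subst sum_sum_single)
    fix g assume g: "g \<in> GG"
    show "(if z \<in> XX \<and> m = eG then a (?x0 g \<otimes>\<^bsub>X\<^esub> inv\<^bsub>X\<^esub> (?x0 g), g) * \<mu> g (?x0 g) (inv\<^bsub>X\<^esub> (?x0 g)) *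
         (\<omega> (inv\<^bsub>X\<^esub> (?x0 g)) (?x0 g) (inv\<^bsub>X\<^esub> (?x0 g)) * antipode_coeff z (inv\<^bsub>G\<^esub> g) *
          inverse (\<gamma> g (inv\<^bsub>G\<^esub> g) z)) else 0) =
      (if z \<in> XX \<and> m = eG then a (eX, g) * \<omega> (inv\<^bsub>X\<^esub> z) z (inv\<^bsub>X\<^esub> z) else 0)"
      using g antipode_beta_coeff[OF g, of "?x0 g"] by (auto simp: mult.assoc)
  qed (auto simp: finite_X)
  also have "\<dots> = smult1 (eps Hb Hep a) Hbeta p"
    by (cases "z \<in> XX \<and> m = eG")
      (auto simp: p smult1_def eps_H_apply H_beta_eq_gvec1 gvec1_apply sum_distrib_right)
  finally show "(\<Sum>i\<in>Hb. \<Sum>j\<in>Hb. Delta Hb Hdc a (i, j) *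
      mul1 Hb Hsc (mul1 Hb Hsc (bvec i) Hbeta) (HS (bvec j)) p) = smult1 (eps Hb Hep a) Hbeta p" .
qed

lemma sum_gvec3_e:
  "(\<Sum>(i, j, k)\<in>Hb \<times> Hb \<times> Hb. gvec3 cf (\<lambda>_. eG) (\<lambda>_. eG) (\<lambda>_. eG) (i, j, k) * F i j k) =
   (\<Sum>(x, y, z)\<in>XX \<times> XX \<times> XX. cf (x, y, z) * F (x, eG) (y, eG) (z, eG))"
  by (subst sum_over_image_support[where \<phi>="\<lambda>(x, y, z). ((x, eG), (y, eG), (z, eG))" and A="XX \<times> XX \<times> XX"])
    (use finite_Hb in \<open>auto simp: inj_on_def gvec3_apply image_iff split_def intro!: sum.cong\<close>)

lemma antipode_Phi_term:
  assumes "x \<in> XX" "y \<in> XX" "z \<in> XX"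
  shows "mul1 Hb Hsc (mul1 Hb Hsc (mul1 Hb Hsc (mul1 Hb Hsc (bvec (x, eG)) Hbeta) (HS (bvec (y, eG)))) Hun)
      (bvec (z, eG)) (w, m) =
    (if w \<in> XX \<and> m = eG \<and> w = x \<and> w = inv\<^bsub>X\<^esub> y \<and> w = z then \<omega> (inv\<^bsub>X\<^esub> x) x (inv\<^bsub>X\<^esub> x) else 0)"
  unfolding antipode_H_bvec[OF assms(2) G.one_closed]
  using assms by (simp add: bvec_eq_gvec1 H_beta_eq_gvec1 gvec1_mul gvec1_V1 mul1_H_right_unit gvec1_apply)

lemma H_antipode_Phi:
  "(\<lambda>p. \<Sum>(i, j, k)\<in>Hb \<times> Hb \<times> Hb. HPhi (i, j, k) *
      mul1 Hb Hsc (mul1 Hb Hsc (mul1 Hb Hsc (mul1 Hb Hsc (bvec i) Hbeta) (HS (bvec j))) Hun) (bvec k) p) = Hun"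
proof
  fix p :: "'x \<times> 'g"
  obtain w m where p: "p = (w, m)" by (cases p)
  have "(\<Sum>(i, j, k)\<in>Hb \<times> Hb \<times> Hb. HPhi (i, j, k) *
      mul1 Hb Hsc (mul1 Hb Hsc (mul1 Hb Hsc (mul1 Hb Hsc (bvec i) Hbeta) (HS (bvec j))) Hun) (bvec k) p) =
     (\<Sum>(x, y, z)\<in>XX \<times> XX \<times> XX. \<omega> x y z *
       (if w \<in> XX \<and> m = eG \<and> w = x \<and> w = inv\<^bsub>X\<^esub> y \<and> w = z then \<omega> (inv\<^bsub>X\<^esub> x) x (inv\<^bsub>X\<^esub> x) else 0))"
    unfolding H_Phi_eq_gvec3 sum_gvec3_e p by (intro sum.cong refl) (auto simp: antipode_Phi_term)
  also have "\<dots> = Hun p"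
  proof (cases "w \<in> XX \<and> m = eG")
    case True
    then show ?thesis
      by (subst sum_eq_single[where t="(w, inv\<^bsub>X\<^esub> w, w)"])
        (use finite_X omega_inverse_pair[of w] in
          \<open>auto simp: p H_unit_eq_gvec1 gvec1_apply inv_X_eq_iff split: if_splits\<close>)
  qed (auto simp: p H_unit_eq_gvec1 gvec1_apply intro!: sum.neutral)
  finally show "(\<Sum>(i, j, k)\<in>Hb \<times> Hb \<times> Hb. HPhi (i, j, k) *
      mul1 Hb Hsc (mul1 Hb Hsc (mul1 Hb Hsc (mul1 Hb Hsc (bvec i) Hbeta) (HS (bvec j))) Hun) (bvec k) p) = Hun p" .
qed

lemma antipode_Psi_term:
  assumes "x \<in> XX" "y \<in> XX" "z \<in> XX"
  shows "mul1 Hb Hsc (mul1 Hb Hsc (mul1 Hb Hsc (mul1 Hb Hsc (HS (bvec (x, eG))) Hun) (bvec (y, eG))) Hbeta)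
      (HS (bvec (z, eG))) (w, m) =
    (if w \<in> XX \<and> m = eG \<and> w = inv\<^bsub>X\<^esub> x \<and> w = y \<and> w = inv\<^bsub>X\<^esub> z then \<omega> (inv\<^bsub>X\<^esub> y) y (inv\<^bsub>X\<^esub> y) else 0)"
  unfolding antipode_H_bvec[OF assms(1) G.one_closed] antipode_H_bvec[OF assms(3) G.one_closed]
  using assms
  by (auto simp: bvec_eq_gvec1 H_beta_eq_gvec1 gvec1_mul gvec1_V1 mul1_H_right_unit gvec1_apply inv_X_eq_iff)

lemma H_antipode_Psi:
  "(\<lambda>p. \<Sum>(i, j, k)\<in>Hb \<times> Hb \<times> Hb. HPsi (i, j, k) *
      mul1 Hb Hsc (mul1 Hb Hsc (mul1 Hb Hsc (mul1 Hb Hsc (HS (bvec i)) Hun) (bvec j)) Hbeta) (HS (bvec k)) p) = Hun"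
proof
  fix p :: "'x \<times> 'g"
  obtain w m where p: "p = (w, m)" by (cases p)
  have "(\<Sum>(i, j, k)\<in>Hb \<times> Hb \<times> Hb. HPsi (i, j, k) *
      mul1 Hb Hsc (mul1 Hb Hsc (mul1 Hb Hsc (mul1 Hb Hsc (HS (bvec i)) Hun) (bvec j)) Hbeta) (HS (bvec k)) p) =
     (\<Sum>(x, y, z)\<in>XX \<times> XX \<times> XX. inverse (\<omega> x y z) *
       (if w \<in> XX \<and> m = eG \<and> w = inv\<^bsub>X\<^esub> x \<and> w = y \<and> w = inv\<^bsub>X\<^esub> z then \<omega> (inv\<^bsub>X\<^esub> y) y (inv\<^bsub>X\<^esub> y) else 0))"
    unfolding HPsi_def sum_gvec3_e p by (intro sum.cong refl) (auto simp: antipode_Psi_term)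
  also have "\<dots> = Hun p"
  proof (cases "w \<in> XX \<and> m = eG")
    case True
    then show ?thesis
      by (subst sum_eq_single[where t="(inv\<^bsub>X\<^esub> w, w, inv\<^bsub>X\<^esub> w)"])
        (use finite_X in \<open>auto simp: p H_unit_eq_gvec1 gvec1_apply inv_X_eq_iff cocycle_nonzero split: if_splits\<close>)
  qed (auto simp: p H_unit_eq_gvec1 gvec1_apply intro!: sum.neutral)
  finally show "(\<Sum>(i, j, k)\<in>Hb \<times> Hb \<times> Hb. HPsi (i, j, k) *
      mul1 Hb Hsc (mul1 Hb Hsc (mul1 Hb Hsc (mul1 Hb Hsc (HS (bvec i)) Hun) (bvec j)) Hbeta) (HS (bvec k)) p) = Hun p" .
qed

lemma H_quasi_hopf: "quasi_hopf_algebra Hb Hsc Hun Hdc Hep HPhi Hsm Hun Hbeta"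
  unfolding quasi_hopf_algebra_def Let_def inv3_H_Phi
  using H_quasi_bialgebra antipode_H_bij antipode_H_unit antipode_H_antimultiplicative
    H_antipode_alpha H_antipode_beta H_antipode_Phi H_antipode_Psi
  by (simp add: H_unit_eq_gvec1 H_beta_eq_gvec1 gvec1_V1)

section \<open>Universal R-matrix\<close>

definition HRinv :: "('x \<times> 'g) \<times> ('x \<times> 'g) \<Rightarrow> 'k" where
  "HRinv = gvec2 (\<lambda>(x, y). \<gamma> (d x) (inv\<^bsub>G\<^esub> (d x)) y * inverse (c x (inv\<^bsub>X\<^esub> x \<otimes>\<^bsub>X\<^esub> (y \<otimes>\<^bsub>X\<^esub> x))))
   (\<lambda>_. eG) (\<lambda>t. inv\<^bsub>G\<^esub> (d (fst t)))"

lemma H_R_right_inverse: "mul2 Hb Hsc HR HRinv = one2 Hun"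
  unfolding H_R_eq_gvec2 HRinv_def one2_eq_gvec2
  apply (subst gvec2_mul)
  apply (simp_all add: mem_Times_iff)
  apply (rule gvec2_cong; simp add: cocycle_nonzero X.m_assoc field_simps)
  done

lemma H_R_left_inverse: "mul2 Hb Hsc HRinv HR = one2 Hun"
  unfolding H_R_eq_gvec2 HRinv_def one2_eq_gvec2
  apply (subst gvec2_mul)
  apply (simp_all add: mem_Times_iff)
  apply (rule gvec2_cong; simp add: cocycle_nonzero X.m_assoc gamma_inv_swap field_simps)
  done

lemma inv2_H_R: "inv2 Hb Hsc Hun HR = HRinv"
  using inv2_eqI[OF H_algebra _ H_R_right_inverse H_R_left_inverse] by (simp add: HRinv_def gvec2_V2)

lemma invertible2_H_R: "invertible2 Hb Hsc Hun HR"
  using H_R_right_inverse H_R_left_inverse unfolding invertible2_def HRinv_def by (blast intro: gvec2_V2)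

lemma Delta_op_H_apply: "Delta_op Hb Hdc a (p, q) = Delta Hb Hdc a (q, p)"
  by (simp add: Delta_op_def)

lemma Delta_op_H_V2: "Delta_op Hb Hdc a \<in> V2 Hb"
  by (auto simp: V2_def Delta_op_def Delta_def ext0_def)

lemma mul2_Delta_op_H_R_apply:
  assumes m: "z1 \<in> XX" "m1 \<in> GG" "z2 \<in> XX" "m2 \<in> GG"
  shows "mul2 Hb Hsc (Delta_op Hb Hdc a) HR ((z1, m1), (z2, m2)) =
    c z1 z2 * (Delta Hb Hdc a ((act (d z1) z2, m2 \<otimes>\<^bsub>G\<^esub> inv\<^bsub>G\<^esub> (d z1)), (z1, m1)) *
      inverse (\<gamma> (m2 \<otimes>\<^bsub>G\<^esub> inv\<^bsub>G\<^esub> (d z1)) (d z1) z2))"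
  unfolding H_R_eq_gvec2 using m
  by (subst mul2_gvec_right[OF m refl _ refl]) (simp_all add: Delta_op_H_apply)

lemma mul2_H_R_Delta_apply:
  assumes m: "z1 \<in> XX" "m1 \<in> GG" "z2 \<in> XX" "m2 \<in> GG"
  shows "mul2 Hb Hsc HR (Delta Hb Hdc a) ((z1, m1), (z2, m2)) =
    Delta Hb Hdc a ((z1, m1), (z2, m1)) * (HR ((act m1 z1, eG), (act m1 z2, m2 \<otimes>\<^bsub>G\<^esub> inv\<^bsub>G\<^esub> m1)) *
      inverse (\<gamma> (m2 \<otimes>\<^bsub>G\<^esub> inv\<^bsub>G\<^esub> m1) m1 z2))"
  unfolding mul2_H_apply[OF m]
  by (subst sum_eq_single[where t="(m1, m1)"])
    (use m finite_G in \<open>auto simp: Delta_H_apply H_R_eq_gvec2 gvec2_apply G.inv_solve_right' split: if_splits\<close>)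

lemma Delta_op_mult_H_R: "mul2 Hb Hsc (Delta_op Hb Hdc a) HR = mul2 Hb Hsc HR (Delta Hb Hdc a)"
proof
  fix P :: "('x \<times> 'g) \<times> ('x \<times> 'g)"
  obtain z1 m1 z2 m2 where P: "P = ((z1, m1), (z2, m2))" by (metis prod.collapse)
  show "mul2 Hb Hsc (Delta_op Hb Hdc a) HR P = mul2 Hb Hsc HR (Delta Hb Hdc a) P"
  proof (cases "z1 \<in> XX \<and> m1 \<in> GG \<and> z2 \<in> XX \<and> m2 \<in> GG")
    case True
    then have m: "z1 \<in> XX" "m1 \<in> GG" "z2 \<in> XX" "m2 \<in> GG" by auto
    note L = mul2_Delta_op_H_R_apply[OF m] and R = mul2_H_R_Delta_apply[OF m]
    show ?thesis
    proof (cases "m2 = m1 \<otimes>\<^bsub>G\<^esub> d z1")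
      case False
      have "m2 \<otimes>\<^bsub>G\<^esub> inv\<^bsub>G\<^esub> (d z1) \<noteq> m1" "m2 \<otimes>\<^bsub>G\<^esub> inv\<^bsub>G\<^esub> m1 \<noteq> d (act m1 z1)"
        using False m by (simp_all add: G.inv_solve_right' d_act G.m_assoc)
      then show ?thesis unfolding P L R using m by (simp add: Delta_H_apply H_R_eq_gvec2 gvec2_apply)
    next
      case True
      have e1: "m2 \<otimes>\<^bsub>G\<^esub> inv\<^bsub>G\<^esub> (d z1) = m1" and e2: "m2 \<otimes>\<^bsub>G\<^esub> inv\<^bsub>G\<^esub> m1 = m1 \<otimes>\<^bsub>G\<^esub> d z1 \<otimes>\<^bsub>G\<^esub> inv\<^bsub>G\<^esub> m1"
        and e3: "d (act m1 z1) = m1 \<otimes>\<^bsub>G\<^esub> d z1 \<otimes>\<^bsub>G\<^esub> inv\<^bsub>G\<^esub> m1"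
        using True m by (simp_all add: G.m_assoc d_act)
      have e4: "z1 \<otimes>\<^bsub>X\<^esub> z2 \<otimes>\<^bsub>X\<^esub> inv\<^bsub>X\<^esub> z1 \<otimes>\<^bsub>X\<^esub> z1 = z1 \<otimes>\<^bsub>X\<^esub> z2"
        and e5: "act (d z1) z2 = z1 \<otimes>\<^bsub>X\<^esub> z2 \<otimes>\<^bsub>X\<^esub> inv\<^bsub>X\<^esub> z1"
        using m by (simp_all add: X.m_assoc)
      have "mul2 Hb Hsc (Delta_op Hb Hdc a) HR P = a (z1 \<otimes>\<^bsub>X\<^esub> z2, m1) *
          (c z1 z2 * \<mu> m1 (z1 \<otimes>\<^bsub>X\<^esub> z2 \<otimes>\<^bsub>X\<^esub> inv\<^bsub>X\<^esub> z1) z1 * inverse (\<gamma> m1 (d z1) z2))"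
        unfolding P L e1 e5 using m by (simp add: Delta_H_apply e4 ac_simps del: act_d_assoc)
      also have "\<dots> = a (z1 \<otimes>\<^bsub>X\<^esub> z2, m1) *
          (c (act m1 z1) (act m1 z2) * \<mu> m1 z1 z2 * inverse (\<gamma> (m1 \<otimes>\<^bsub>G\<^esub> d z1 \<otimes>\<^bsub>G\<^esub> inv\<^bsub>G\<^esub> m1) m1 z2))"
        by (simp only: cocycle_e_rearranged[OF m(2) m(1) m(3)])
      also have "\<dots> = mul2 Hb Hsc HR (Delta Hb Hdc a) P"
        unfolding P R e2 using m by (simp add: Delta_H_apply H_R_eq_gvec2 gvec2_apply e3 ac_simps)
      finally show ?thesis .
    qed
  qed (simp add: P mul2_outside)
qed

lemma H_R_conjugates_Delta: "Delta_op Hb Hdc a = mul2 Hb Hsc (mul2 Hb Hsc HR (Delta Hb Hdc a)) (inv2 Hb Hsc Hun HR)"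
proof -
  have "mul2 Hb Hsc (mul2 Hb Hsc HR (Delta Hb Hdc a)) (inv2 Hb Hsc Hun HR) =
        mul2 Hb Hsc (mul2 Hb Hsc (Delta_op Hb Hdc a) HR) HRinv" by (simp add: Delta_op_mult_H_R inv2_H_R)
  also have "\<dots> = mul2 Hb Hsc (Delta_op Hb Hdc a) (mul2 Hb Hsc HR HRinv)" by (rule mul2_H_associative)
  also have "\<dots> = Delta_op Hb Hdc a" by (simp add: H_R_right_inverse mul2_H_right_unit Delta_op_H_V2)
  finally show ?thesis by simp
qed

lemma Delta_x_id_H_R: "Delta_x_id Hb Hdc HR = gvec3 (\<lambda>(x, y, z). c (x \<otimes>\<^bsub>X\<^esub> y) z) (\<lambda>_. eG) (\<lambda>_. eG)
   (\<lambda>t. d (fst t \<otimes>\<^bsub>X\<^esub> fst (snd t)))"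
  by (auto simp: fun_eq_iff Delta_x_id_H_apply H_R_eq_gvec2 gvec2_apply gvec3_apply)
lemma id_x_Delta_H_R: "id_x_Delta Hb Hdc HR = gvec3 (\<lambda>(x, y, z). c x (y \<otimes>\<^bsub>X\<^esub> z) * \<mu> (d x) y z) (\<lambda>_. eG)
   (\<lambda>t. d (fst t)) (\<lambda>t. d (fst t))"
  by (auto simp: fun_eq_iff id_x_Delta_H_apply H_R_eq_gvec2 gvec2_apply gvec3_apply)
lemma leg312_H_Phi: "leg312 HPhi = gvec3 (\<lambda>(x, y, z). \<omega> z x y) (\<lambda>_. eG) (\<lambda>_. eG) (\<lambda>_. eG)"
  by (auto simp: fun_eq_iff leg312_def H_Phi_eq_gvec3 gvec3_apply)
lemma leg213_H_Phi: "leg213 HPhi = gvec3 (\<lambda>(x, y, z). \<omega> y x z) (\<lambda>_. eG) (\<lambda>_. eG) (\<lambda>_. eG)"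
  by (auto simp: fun_eq_iff leg213_def H_Phi_eq_gvec3 gvec3_apply)
lemma leg132_H_Psi: "leg132 HPsi = gvec3 (\<lambda>(x, y, z). inverse (\<omega> x z y)) (\<lambda>_. eG) (\<lambda>_. eG) (\<lambda>_. eG)"
  by (auto simp: fun_eq_iff leg132_def HPsi_def gvec3_apply)
lemma leg231_H_Psi: "leg231 HPsi = gvec3 (\<lambda>(x, y, z). inverse (\<omega> y z x)) (\<lambda>_. eG) (\<lambda>_. eG) (\<lambda>_. eG)"
  by (auto simp: fun_eq_iff leg231_def HPsi_def gvec3_apply)
lemma R13_H_eq_gvec3: "R13 Hun HR = gvec3 (\<lambda>(x, y, z). c x z) (\<lambda>_. eG) (\<lambda>_. eG) (\<lambda>t. d (fst t))"
  by (auto simp: fun_eq_iff R13_def H_R_eq_gvec2 H_unit_eq_gvec1 gvec1_apply gvec2_apply gvec3_apply)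
lemma R23_H_eq_gvec3: "R23 Hun HR = gvec3 (\<lambda>(x, y, z). c y z) (\<lambda>_. eG) (\<lambda>_. eG) (\<lambda>t. d (fst (snd t)))"
  by (auto simp: fun_eq_iff R23_def H_R_eq_gvec2 H_unit_eq_gvec1 gvec1_apply gvec2_apply gvec3_apply)
lemma R12_H_eq_gvec3: "R12 Hun HR = gvec3 (\<lambda>(x, y, z). c x y) (\<lambda>_. eG) (\<lambda>t. d (fst t)) (\<lambda>_. eG)"
  by (auto simp: fun_eq_iff R12_def H_R_eq_gvec2 H_unit_eq_gvec1 gvec1_apply gvec2_apply gvec3_apply)

lemma H_hexagon_Delta_x_id: "Delta_x_id Hb Hdc HR =
   mul3 Hb Hsc (mul3 Hb Hsc (mul3 Hb Hsc (mul3 Hb Hsc (leg312 HPhi) (R13 Hun HR)) (leg132 (inv3 Hb Hsc Hun HPhi))) (R23 Hun HR)) HPhi"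
  unfolding inv3_H_Phi Delta_x_id_H_R leg312_H_Phi R13_H_eq_gvec3 leg132_H_Psi R23_H_eq_gvec3
  unfolding H_Phi_eq_gvec3

  apply (subst gvec3_mul, simp_all add: mem_Times_iff act3_def)+
  apply (rule gvec3_cong)
     apply (simp_all add: act3_def)
  subgoal for x y z using cocycle_f[of x y z] by (simp add: X.m_assoc X.inv_mult_group divide_inverse ac_simps)
  done

lemma H_hexagon_id_x_Delta: "id_x_Delta Hb Hdc HR =
   mul3 Hb Hsc (mul3 Hb Hsc (mul3 Hb Hsc (mul3 Hb Hsc (leg231 (inv3 Hb Hsc Hun HPhi)) (R13 Hun HR)) (leg213 HPhi)) (R12 Hun HR)) (inv3 Hb Hsc Hun HPhi)"
  unfolding inv3_H_Phi id_x_Delta_H_R leg231_H_Psi R13_H_eq_gvec3 leg213_H_Phi R12_H_eq_gvec3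
  unfolding HPsi_def
  apply (subst gvec3_mul, simp_all add: mem_Times_iff act3_def)+
  apply (rule gvec3_cong)
     apply (simp_all add: act3_def)
  subgoal for x y z using cocycle_g[of x y z] by (simp add: X.m_assoc X.inv_mult_group divide_inverse ac_simps cocycle_nonzero)
  done

lemma H_qt_quasi_hopf: "qt_quasi_hopf_algebra Hb Hsc Hun Hdc Hep HPhi Hsm Hun Hbeta HR"
  unfolding qt_quasi_hopf_algebra_def Let_def
  using H_quasi_hopf invertible2_H_R H_R_conjugates_Delta H_hexagon_Delta_x_id H_hexagon_id_x_Delta
  by (simp add: H_R_eq_gvec2 gvec2_V2)

end

theorem proposition6p1:
  fixes G :: "'g monoid" and X :: "'x monoid"
    and act :: "'g \<Rightarrow> 'x \<Rightarrow> 'x" and d :: "'x \<Rightarrow> 'g"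
    and \<omega> :: "'x \<Rightarrow> 'x \<Rightarrow> 'x \<Rightarrow> 'k::field_char_0"
    and \<gamma> :: "'g \<Rightarrow> 'g \<Rightarrow> 'x \<Rightarrow> 'k" and \<mu> :: "'g \<Rightarrow> 'x \<Rightarrow> 'x \<Rightarrow> 'k"
    and c :: "'x \<Rightarrow> 'x \<Rightarrow> 'k"
  assumes "alg_closed_field TYPE('k)"
    and "finite_crossed_module G X act d"
    and "quasi_abelian_3_cocycle G X act d \<omega> \<gamma> \<mu> c"
    and "normalized_cocycle G X \<omega> \<gamma> \<mu> c"
  shows "qt_quasi_hopf_algebra (H_basis G X) (H_sc G X act \<gamma>) (H_unit G X)
           (H_dc G X \<mu>) (H_ep G X) (H_Phi G X \<omega>)
           (H_sm G X act \<gamma> \<mu>) (H_unit G X) (H_beta G X \<omega>) (H_R G X d c)"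
proof -
  interpret crossed_module_cocycle G X act d \<omega> \<gamma> \<mu> c
    using assms(2-4) by unfold_locales
  show ?thesis by (rule H_qt_quasi_hopf)
qed

end
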